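(* Let $r>0$. With probability at least $1-2/(n_1+n_2)$, for all $\Delta\in\mathcal{C}(r)$, $$\frac1m\|\mathcal{R}_\Omega(\Delta)\|_2^2\ \ge\ \frac12\langle\mathcal{Q}_\beta(\Delta),\Delta\rangle-128\,\mu_1 d_2\, r\,\vartheta_m^2.$$
   Context: Let $\mathbb{V}^{n_1\times n_2}$ denote one of $\mathbb{R}^{n_1\times n_2}$, $\mathbb{C}^{n_1\times n_2}$, the real symmetric $n\times n$ matrices, or the Hermitian $n\times n$ matrices ($n_1=n_2=n$ in the last two cases), regarded as a real inner product space with $\langle X,Y\rangle=\mathrm{Re}\,\mathrm{Tr}(X^{\mathbb{T}}Y)$ ($^{\mathbb{T}}$ = transpose or conjugate transpose); $\|\cdot\|$, $\|\cdot\|_*$, $\|\cdot\|_F$ are spectral, nuclear and Frobenius norms. Let $\{\Theta_1,\dots,\Theta_d\}$ be an orthonormal basis, $\alpha\subseteq\{1,\dots,d\}$, $\beta$ its complement, $d_2=|\beta|$, $\mathcal{R}_\pi(X)=(\langle\Theta_k,X\rangle)_{k\in\pi}$. Let $p_k>0$ ($k\in\beta$), $\sum_{k\in\beta}p_k=1$, and $\mathcal{Q}_\beta(X)=\sum_{k\in\beta}p_k\langle\Theta_k,X\rangle\Theta_k$. Let $\omega_1,\dots,\omega_m$ be i.i.d. with $\Pr(\omega_i=k)=p_k$ for $k\in\beta$ (and $0$ for $k\in\alpha$), $\mathcal{R}_\Omega(X)=(\langle\Theta_{\omega_i},X\rangle)_{i=1}^m$, $\mathcal{R}_\Omega^*(z)=\sum_i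 z_i\Theta_{\omega_i}$. Let $\mu_1\ge1$ be a constant with $p_k\ge(\mu_1d_2)^{-1}$ for all $k\in\beta$. Let $\epsilon=(\epsilon_1,\dots,\epsilon_m)$ be an i.i.d. Rademacher sequence independent of the $\omega_i$ and $\vartheta_m=\mathbb{E}\|\frac1m\mathcal{R}_\Omega^*(\epsilon)\|$. Define $$\mathcal{C}(r)=\Big\{\Delta:\ \mathcal{R}_\alpha(\Delta)=0,\ \|\mathcal{R}_\beta(\Delta)\|_\infty=1,\ \|\Delta\|_*\le\sqrt r\|\Delta\|_F,\ \langle\mathcal{Q}_\beta(\Delta),\Delta\rangle\ge\sqrt{\tfrac{64\log(n_1+n_2)}{\log(2)\,m}}\Big\}.$$ *)

theory Defs
  imports "HOL-Probability.Probability"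
begin

text \<open>Matrices of size n1 x n2 are represented as functions nat => nat => complex
  that vanish outside the index range {..<n1} x {..<n2}.  Real, real symmetric and
  Hermitian matrices are real subspaces of the complex matrices, with the same
  inner product and norms.\<close>

type_synonym cmat = "nat \<Rightarrow> nat \<Rightarrow> complex"

definition mats :: "nat \<Rightarrow> nat \<Rightarrow> cmat set" where
  "mats n1 n2 = {X. \<forall>i j. (n1 \<le> i \<or> n2 \<le> j) \<longrightarrow> X i j = 0}"

definition real_mats :: "nat \<Rightarrow> nat \<Rightarrow> cmat set" where
  "real_mats n1 n2 = {X \<in> mats n1 n2. \<forall>i j. Im (X i j) = 0}"

definition sym_mats :: "nat \<Rightarrow> cmat set" where
  "sym_mats n = {X \<in> real_mats n n. \<forall>i j. X j i = X i j}"

definition herm_mats :: "nat \<Rightarrow> cmat set" where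
  "herm_mats n = {X \<in> mats n n. \<forall>i j. X j i = cnj (X i j)}"

definition minner :: "nat \<Rightarrow> nat \<Rightarrow> cmat \<Rightarrow> cmat \<Rightarrow> real" where
  "minner n1 n2 X Y = Re (\<Sum>i<n1. \<Sum>j<n2. cnj (X i j) * Y i j)"

definition frob_norm :: "nat \<Rightarrow> nat \<Rightarrow> cmat \<Rightarrow> real" where
  "frob_norm n1 n2 X = sqrt (minner n1 n2 X X)"

definition spec_norm :: "nat \<Rightarrow> nat \<Rightarrow> cmat \<Rightarrow> real" where
  "spec_norm n1 n2 X =
     (SUP v\<in>{v :: nat \<Rightarrow> complex. (\<Sum>j<n2. (cmod (v j))\<^sup>2) \<le> 1}.
        sqrt (\<Sum>i<n1. (cmod (\<Sum>j<n2. X i j * v j))\<^sup>2))"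

text \<open>Nuclear norm, as the dual norm of the spectral norm (= sum of singular values).\<close>
definition nuc_norm :: "nat \<Rightarrow> nat \<Rightarrow> cmat \<Rightarrow> real" where
  "nuc_norm n1 n2 X = (SUP Y\<in>{Y \<in> mats n1 n2. spec_norm n1 n2 Y \<le> 1}. minner n1 n2 X Y)"

definition Qop :: "nat \<Rightarrow> nat \<Rightarrow> (nat \<Rightarrow> cmat) \<Rightarrow> nat set \<Rightarrow> nat pmf \<Rightarrow> cmat \<Rightarrow> cmat" where
  "Qop n1 n2 \<Theta> \<beta> P X =
     (\<lambda>i j. \<Sum>k\<in>\<beta>. complex_of_real (pmf P k * minner n1 n2 (\<Theta> k) X) * \<Theta> k i j)"

definition Cset :: "nat \<Rightarrow> nat \<Rightarrow> cmat set \<Rightarrow> (nat \<Rightarrow> cmat) \<Rightarrow> nat set \<Rightarrow> nat set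
    \<Rightarrow> nat pmf \<Rightarrow> nat \<Rightarrow> real \<Rightarrow> cmat set" where
  "Cset n1 n2 VV \<Theta> \<alpha> \<beta> P m r =
     {\<Delta> \<in> VV. (\<forall>k\<in>\<alpha>. minner n1 n2 (\<Theta> k) \<Delta> = 0)
        \<and> Max ((\<lambda>k. \<bar>minner n1 n2 (\<Theta> k) \<Delta>\<bar>) ` \<beta>) = 1
        \<and> nuc_norm n1 n2 \<Delta> \<le> sqrt r * frob_norm n1 n2 \<Delta>
        \<and> minner n1 n2 (Qop n1 n2 \<Theta> \<beta> P \<Delta>) \<Delta>
            \<ge> sqrt (64 * ln (real (n1 + n2)) / (ln 2 * real m))}"

text \<open>Distribution of (omega_1,...,omega_m) (indices 0..<m), i.i.d. with law P.\<close>
definition omega_pmf :: "nat pmf \<Rightarrow> nat \<Rightarrow> (nat \<Rightarrow> nat) pmf" where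
  "omega_pmf P m = Pi_pmf {..<m} 0 (\<lambda>_. P)"

definition rademacher_pmf :: "nat \<Rightarrow> (nat \<Rightarrow> real) pmf" where
  "rademacher_pmf m = Pi_pmf {..<m} 0 (\<lambda>_. pmf_of_set {-1, 1})"

text \<open>vartheta_m = E || (1/m) R_Omega^*(epsilon) ||.\<close>
definition vartheta :: "nat \<Rightarrow> nat \<Rightarrow> (nat \<Rightarrow> cmat) \<Rightarrow> nat pmf \<Rightarrow> nat \<Rightarrow> real" where
  "vartheta n1 n2 \<Theta> P m =
     measure_pmf.expectation (pair_pmf (omega_pmf P m) (rademacher_pmf m))
       (\<lambda>(\<omega>, \<epsilon>). spec_norm n1 n2
          (\<lambda>i j. \<Sum>l<m. complex_of_real (\<epsilon> l / real m) * \<Theta> (\<omega> l) i j))"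

end

theory Submission
  imports Defs
begin

text \<open>Write \<open>q(\<Delta>) = \<langle>Q\<^sub>\<beta>(\<Delta>), \<Delta>\<rangle>\<close> for the mean and \<open>q\<^sub>\<Omega>(\<Delta>) = \<parallel>R\<^sub>\<Omega>(\<Delta>)\<parallel>\<^sup>2/m\<close> for the empirical
  mean of the squared coefficients \<open>\<langle>\<Theta>\<^sub>k, \<Delta>\<rangle>\<^sup>2 \<in> [0, 1]\<close>. Peeling: \<open>C(r)\<close> is covered by the sublevel
  sets \<open>{q \<le> T}\<close>, \<open>T = 2\<^sup>l \<nu>\<close> with \<open>\<nu>\<close> the lower bound on \<open>q\<close> in the definition of \<open>C(r)\<close>. On each of
  them \<open>Z = sup (q - q\<^sub>\<Omega>)\<close> has bounded differences \<open>1/m\<close>, so by McDiarmid it exceeds its mean by \<open>T/8\<close>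
  with probability at most \<open>exp (-m T\<^sup>2/128)\<close>, and these bounds sum to \<open>1/(n\<^sub>1+n\<^sub>2)\<close> over \<open>l\<close>.
  Symmetrization and the contraction principle bound the mean of \<open>Z\<close> by four times the
  Rademacher average of the coefficients themselves, which equals \<open>\<langle>(1/m) R\<^sub>\<Omega>\<^sup>*(\<epsilon>), \<Delta>\<rangle>\<close>; trace
  duality, the cone condition \<open>\<parallel>\<Delta>\<parallel>\<^sub>* \<le> \<surd>r \<parallel>\<Delta>\<parallel>\<^sub>F\<close> and \<open>\<parallel>\<Delta>\<parallel>\<^sub>F\<^sup>2 \<le> \<mu>\<^sub>1 d\<^sub>2 q(\<Delta>)\<close> give
  \<open>E Z \<le> 4 \<surd>(r \<mu>\<^sub>1 d\<^sub>2 T) \<vartheta>\<^sub>m\<close>. For \<open>\<Delta>\<close> in the shell \<open>T/2 \<le> q(\<Delta>) \<le> T\<close> this yields, after AM-GM,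
  \<open>q(\<Delta>) - q\<^sub>\<Omega>(\<Delta>) \<le> T/4 + 32 r \<mu>\<^sub>1 d\<^sub>2 \<vartheta>\<^sub>m\<^sup>2 \<le> q(\<Delta>)/2 + 32 r \<mu>\<^sub>1 d\<^sub>2 \<vartheta>\<^sub>m\<^sup>2\<close>.\<close>

section \<open>Expectations under finitely supported distributions\<close>

lemma expectation_finite_pmf:
  fixes f :: "'a \<Rightarrow> real"
  assumes "finite (set_pmf M)"
  shows "measure_pmf.expectation M f = (\<Sum>a\<in>set_pmf M. f a * pmf M a)"
  by (rule integral_measure_pmf_real[OF assms]) auto

lemma expectation_pair_pmf_finite:
  fixes f :: "'a \<times> 'b \<Rightarrow> real"
  assumes "finite (set_pmf A)" "finite (set_pmf B)"
  shows "measure_pmf.expectation (pair_pmf A B) f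
     = measure_pmf.expectation A (\<lambda>a. measure_pmf.expectation B (\<lambda>b. f (a, b)))"
proof -
  have "measure_pmf.expectation (pair_pmf A B) f
      = (\<Sum>x\<in>set_pmf A \<times> set_pmf B. f x * pmf (pair_pmf A B) x)"
    using assms by (subst expectation_finite_pmf) auto
  also have "\<dots> = (\<Sum>a\<in>set_pmf A. \<Sum>b\<in>set_pmf B. f (a,b) * pmf (pair_pmf A B) (a,b))"
    by (simp add: sum.cartesian_product case_prod_beta)
  also have "\<dots> = (\<Sum>a\<in>set_pmf A. (\<Sum>b\<in>set_pmf B. f (a,b) * pmf B b) * pmf A a)"
    by (simp add: pmf_pair sum_distrib_right sum_distrib_left mult_ac)
  also have "\<dots> = measure_pmf.expectation A (\<lambda>a. measure_pmf.expectation B (\<lambda>b. f (a, b)))"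
    using assms by (simp add: expectation_finite_pmf)
  finally show ?thesis .
qed

lemma expectation_swap_finite:
  fixes f :: "'a \<Rightarrow> 'b \<Rightarrow> real"
  assumes "finite (set_pmf A)" "finite (set_pmf B)"
  shows "measure_pmf.expectation A (\<lambda>a. measure_pmf.expectation B (\<lambda>b. f a b))
     = measure_pmf.expectation B (\<lambda>b. measure_pmf.expectation A (\<lambda>a. f a b))"
  using assms by (simp add: expectation_finite_pmf sum_distrib_left mult_ac)
    (subst sum.swap, simp add: mult_ac)

lemma expectation_mono_finite:
  fixes f g :: "'a \<Rightarrow> real"
  assumes "finite (set_pmf M)" "\<And>x. x \<in> set_pmf M \<Longrightarrow> f x \<le> g x"
  shows "measure_pmf.expectation M f \<le> measure_pmf.expectation M g"
  using assms by (simp add: expectation_finite_pmf) (intro sum_mono mult_right_mono, auto)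

lemma expectation_add_finite:
  fixes f g :: "'a \<Rightarrow> real"
  assumes "finite (set_pmf M)"
  shows "measure_pmf.expectation M (\<lambda>x. f x + g x)
     = measure_pmf.expectation M f + measure_pmf.expectation M g"
  using assms by (simp add: expectation_finite_pmf algebra_simps sum.distrib)

lemma expectation_sum_finite:
  fixes f :: "'i \<Rightarrow> 'a \<Rightarrow> real"
  assumes "finite (set_pmf M)"
  shows "measure_pmf.expectation M (\<lambda>x. \<Sum>i\<in>I. f i x) = (\<Sum>i\<in>I. measure_pmf.expectation M (f i))"
  using assms by (simp add: expectation_finite_pmf sum_distrib_right) (rule sum.swap)

lemma abs_expectation_le_finite:
  fixes f :: "'a \<Rightarrow> real"
  assumes "finite (set_pmf M)" "\<And>x. x \<in> set_pmf M \<Longrightarrow> \<bar>f x\<bar> \<le> c"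
  shows "\<bar>measure_pmf.expectation M f\<bar> \<le> c"
proof -
  have "measure_pmf.expectation M f \<le> measure_pmf.expectation M (\<lambda>_. c)"
    using assms by (intro expectation_mono_finite) (auto simp: abs_le_iff)
  moreover have "measure_pmf.expectation M (\<lambda>_. -c) \<le> measure_pmf.expectation M f"
    using assms(2) by (intro expectation_mono_finite[OF assms(1)]) (fastforce simp: abs_le_iff)
  ultimately show ?thesis by simp
qed

lemma map_pmf_involution_eq:
  assumes "\<And>x. \<sigma> (\<sigma> x) = x" "\<And>x. pmf M (\<sigma> x) = pmf M x"
  shows "map_pmf \<sigma> M = M"
proof (rule pmf_eqI)
  fix x
  have "inj \<sigma>" by (metis assms(1) injI)
  then have "pmf (map_pmf \<sigma> M) (\<sigma> (\<sigma> x)) = pmf M (\<sigma> x)" by (rule pmf_map_inj')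
  then show "pmf (map_pmf \<sigma> M) x = pmf M x" by (simp add: assms)
qed

lemma expectation_involution_invariant:
  fixes f :: "'a \<Rightarrow> real"
  assumes "\<And>x. \<sigma> (\<sigma> x) = x" "\<And>x. pmf M (\<sigma> x) = pmf M x"
  shows "measure_pmf.expectation M (\<lambda>x. f (\<sigma> x)) = measure_pmf.expectation M f"
  using map_pmf_involution_eq[OF assms] integral_map_pmf[of \<sigma> M f] by simp

lemma prob_ge_le_exp_moment:
  fixes f :: "'a \<Rightarrow> real"
  assumes "finite (set_pmf M)" "l > 0"
  shows "measure_pmf.prob M {x. f x \<ge> t}
     \<le> measure_pmf.expectation M (\<lambda>x. exp (l * f x)) / exp (l * t)"
proof -
  have "measure_pmf.prob M {x. f x \<ge> t} = measure_pmf.expectation M (indicator {x. f x \<ge> t})"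
    by simp
  also have "\<dots> \<le> measure_pmf.expectation M (\<lambda>x. exp (l * f x) / exp (l * t))"
  proof (rule expectation_mono_finite[OF assms(1)])
    fix x
    have "f x \<ge> t \<Longrightarrow> exp (l * t) \<le> exp (l * f x)" using assms(2) by simp
    then show "indicator {x. f x \<ge> t} x \<le> exp (l * f x) / exp (l * t)"
      by (auto simp: indicator_def)
  qed
  also have "\<dots> = measure_pmf.expectation M (\<lambda>x. exp (l * f x)) / exp (l * t)"
    by simp
  finally show ?thesis .
qed

lemma prob_mono_on_support:
  assumes "\<And>x. x \<in> set_pmf M \<Longrightarrow> x \<in> A \<Longrightarrow> x \<in> B"
  shows "measure_pmf.prob M A \<le> measure_pmf.prob M B"
proof -
  have "measure_pmf.prob M A = measure_pmf.prob M (A \<inter> set_pmf M)"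
    by (simp add: measure_Int_set_pmf)
  also have "\<dots> \<le> measure_pmf.prob M B"
    by (rule measure_pmf.finite_measure_mono) (use assms in auto)
  finally show ?thesis .
qed

lemma finite_set_Pi_pmf:
  assumes "finite A" "\<And>x. x \<in> A \<Longrightarrow> finite (set_pmf (p x))"
  shows "finite (set_pmf (Pi_pmf A dflt p))"
  using assms by (subst set_Pi_pmf) auto

lemma expectation_Pi_pmf_insert:
  fixes F :: "('a \<Rightarrow> 'b) \<Rightarrow> real"
  assumes "finite A" "a \<notin> A" "finite (set_pmf (p a))" "finite (set_pmf (Pi_pmf A dflt p))"
  shows "measure_pmf.expectation (Pi_pmf (insert a A) dflt p) F
     = measure_pmf.expectation (Pi_pmf A dflt p)
         (\<lambda>h. measure_pmf.expectation (p a) (\<lambda>y. F (h(a:=y))))"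
proof -
  have "measure_pmf.expectation (Pi_pmf (insert a A) dflt p) F
     = measure_pmf.expectation (pair_pmf (p a) (Pi_pmf A dflt p)) (\<lambda>(y,h). F (h(a:=y)))"
    using assms by (simp add: Pi_pmf_insert case_prod_unfold)
  also have "\<dots> = measure_pmf.expectation (p a)
                    (\<lambda>y. measure_pmf.expectation (Pi_pmf A dflt p) (\<lambda>h. F (h(a:=y))))"
    using assms by (simp add: expectation_pair_pmf_finite)
  also have "\<dots> = measure_pmf.expectation (Pi_pmf A dflt p)
                    (\<lambda>h. measure_pmf.expectation (p a) (\<lambda>y. F (h(a:=y))))"
    by (rule expectation_swap_finite[OF assms(3,4)])
  finally show ?thesis .
qed

lemma expectation_Pi_pmf_component:
  fixes F :: "'b \<Rightarrow> real"
  assumes "finite A" "i \<in> A"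
  shows "measure_pmf.expectation (Pi_pmf A dflt p) (\<lambda>h. F (h i)) = measure_pmf.expectation (p i) F"
  using assms integral_map_pmf[of "\<lambda>h. h i" "Pi_pmf A dflt p" F] by (simp add: Pi_pmf_component)

section \<open>McDiarmid's inequality\<close>

lemma hoeffding_lemma_pmf:
  fixes X :: "'a \<Rightarrow> real"
  assumes fin: "finite (set_pmf M)" and range: "\<And>x. x \<in> set_pmf M \<Longrightarrow> X x \<in> {a..b}"
    and mean_zero: "measure_pmf.expectation M X = 0" and l: "l > 0"
  shows "measure_pmf.expectation M (\<lambda>x. exp (l * X x)) \<le> exp (l\<^sup>2 * (b - a)\<^sup>2 / 8)"
proof -
  interpret interval_bounded_random_variable "measure_pmf M" X a b
    by unfold_locales (use range in \<open>auto simp: AE_measure_pmf_iff\<close>)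
  have "(\<integral>\<^sup>+x. ennreal (exp (l * X x)) \<partial>M) \<le> ennreal (exp (l\<^sup>2 * (b - a)\<^sup>2 / 8))"
    by (rule Hoeffdings_lemma_nn_integral_0[OF l mean_zero])
  moreover have "(\<integral>\<^sup>+x. ennreal (exp (l * X x)) \<partial>M)
      = ennreal (measure_pmf.expectation M (\<lambda>x. exp (l * X x)))"
    by (rule nn_integral_eq_integral) (auto intro: integrable_measure_pmf_finite[OF fin])
  ultimately show ?thesis by simp
qed

lemma expectation_exp_centered_le:
  fixes F :: "'b \<Rightarrow> real"
  assumes fin: "finite (set_pmf p)" and l: "l > 0" and diff: "\<And>y z. \<bar>F y - F z\<bar> \<le> c"
  shows "measure_pmf.expectation p (\<lambda>y. exp (l * (F y - measure_pmf.expectation p F)))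
    \<le> exp (l\<^sup>2 * c\<^sup>2 / 2)"
proof -
  define X where "X y = F y - measure_pmf.expectation p F" for y
  obtain y0 where y0: "y0 \<in> set_pmf p" using set_pmf_not_empty by fast
  have "measure_pmf.expectation p X = 0"
    unfolding X_def
    by (subst Bochner_Integration.integral_diff) (auto intro: integrable_measure_pmf_finite[OF fin])
  moreover have "X y \<in> {X y0 - c .. X y0 + c}" for y
    using diff[of y y0] by (auto simp: X_def)
  ultimately have "measure_pmf.expectation p (\<lambda>y. exp (l * X y))
      \<le> exp (l\<^sup>2 * ((X y0 + c) - (X y0 - c))\<^sup>2 / 8)"
    by (intro hoeffding_lemma_pmf[OF fin _ _ l]) auto
  then show ?thesis by (simp add: X_def power2_eq_square algebra_simps)
qed

lemma abs_diff_expectation_update_le: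
  fixes f :: "('a \<Rightarrow> 'b) \<Rightarrow> real"
  assumes fin: "finite (set_pmf q)" and "i \<noteq> a"
    and diff: "\<And>h y z. \<bar>f (h(i:=y)) - f (h(i:=z))\<bar> \<le> c"
  shows "\<bar>measure_pmf.expectation q (\<lambda>y'. f ((h(i:=y))(a:=y')))
          - measure_pmf.expectation q (\<lambda>y'. f ((h(i:=z))(a:=y')))\<bar> \<le> c"
proof -
  have "measure_pmf.expectation q (\<lambda>y'. f ((h(i:=y))(a:=y')))
          - measure_pmf.expectation q (\<lambda>y'. f ((h(i:=z))(a:=y')))
      = measure_pmf.expectation q (\<lambda>y'. f ((h(a:=y'))(i:=y)) - f ((h(a:=y'))(i:=z)))"
    using assms(2) fin
    by (subst Bochner_Integration.integral_diff)
      (auto intro: integrable_measure_pmf_finite simp: fun_upd_twist)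
  also have "\<bar>\<dots>\<bar> \<le> c"
    by (rule abs_expectation_le_finite[OF fin diff])
  finally show ?thesis .
qed

lemma mcdiarmid_mgf_bound:
  fixes f :: "('a \<Rightarrow> 'b) \<Rightarrow> real"
  assumes "finite A" "\<And>x. x \<in> A \<Longrightarrow> finite (set_pmf (p x))" "l > 0"
    "\<And>i h y z. i \<in> A \<Longrightarrow> \<bar>f (h(i:=y)) - f (h(i:=z))\<bar> \<le> c"
  shows "measure_pmf.expectation (Pi_pmf A dflt p)
           (\<lambda>h. exp (l * (f h - measure_pmf.expectation (Pi_pmf A dflt p) f)))
         \<le> exp (l\<^sup>2 * c\<^sup>2 * real (card A) / 2)"
  using assms(1,2,4)
proof (induction A arbitrary: f rule: finite_induct)
  case empty
  then show ?case by simp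
next
  case (insert a A)
  define PA where "PA = Pi_pmf A dflt p"
  define g where "g h = measure_pmf.expectation (p a) (\<lambda>y. f (h(a:=y)))" for h
  have fin_PA: "finite (set_pmf PA)" unfolding PA_def using insert by (intro finite_set_Pi_pmf) auto
  have fin_a: "finite (set_pmf (p a))" using insert by auto
  have split: "measure_pmf.expectation (Pi_pmf (insert a A) dflt p) F
     = measure_pmf.expectation PA (\<lambda>h. measure_pmf.expectation (p a) (\<lambda>y. F (h(a:=y))))"
    for F :: "('a \<Rightarrow> 'b) \<Rightarrow> real"
    unfolding PA_def using insert fin_a fin_PA[unfolded PA_def] by (intro expectation_Pi_pmf_insert)
  define \<mu> where "\<mu> = measure_pmf.expectation PA g"
  have mean: "measure_pmf.expectation (Pi_pmf (insert a A) dflt p) f = \<mu>"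
    unfolding \<mu>_def g_def split by simp
  have g_diff: "\<bar>g (h(i:=y)) - g (h(i:=z))\<bar> \<le> c" if "i \<in> A" for i h y z
    unfolding g_def by (rule abs_diff_expectation_update_le[OF fin_a]) (use that insert in auto)
  have IH: "measure_pmf.expectation PA (\<lambda>h. exp (l * (g h - \<mu>)))
         \<le> exp (l\<^sup>2 * c\<^sup>2 * real (card A) / 2)"
    unfolding \<mu>_def PA_def
    by (rule insert.IH[of g]) (use insert.prems g_diff in \<open>auto simp: fun_upd_def\<close>)
  have inner: "measure_pmf.expectation (p a) (\<lambda>y. exp (l * (f (h(a:=y)) - \<mu>)))
      \<le> exp (l * (g h - \<mu>)) * exp (l\<^sup>2 * c\<^sup>2 / 2)" for h
  proof -
    have "measure_pmf.expectation (p a) (\<lambda>y. exp (l * (f (h(a:=y)) - \<mu>)))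
        = exp (l * (g h - \<mu>)) * measure_pmf.expectation (p a) (\<lambda>y. exp (l * (f (h(a:=y)) - g h)))"
      by (simp add: mult_exp_exp algebra_simps flip: integral_mult_right_zero)
    also have "\<dots> \<le> exp (l * (g h - \<mu>)) * exp (l\<^sup>2 * c\<^sup>2 / 2)"
      unfolding g_def using insert.prems(2)[of a h]
      by (intro mult_left_mono expectation_exp_centered_le[OF fin_a \<open>l > 0\<close>]) (auto simp: fun_upd_def)
    finally show ?thesis .
  qed
  have "measure_pmf.expectation (Pi_pmf (insert a A) dflt p)
           (\<lambda>h. exp (l * (f h - measure_pmf.expectation (Pi_pmf (insert a A) dflt p) f)))
      = measure_pmf.expectation PA
          (\<lambda>h. measure_pmf.expectation (p a) (\<lambda>y. exp (l * (f (h(a:=y)) - \<mu>))))"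
    unfolding mean by (rule split)
  also have "\<dots> \<le> measure_pmf.expectation PA (\<lambda>h. exp (l * (g h - \<mu>)) * exp (l\<^sup>2 * c\<^sup>2 / 2))"
    by (intro expectation_mono_finite[OF fin_PA] inner)
  also have "\<dots> = measure_pmf.expectation PA (\<lambda>h. exp (l * (g h - \<mu>))) * exp (l\<^sup>2 * c\<^sup>2 / 2)"
    by simp
  also have "\<dots> \<le> exp (l\<^sup>2 * c\<^sup>2 * real (card A) / 2) * exp (l\<^sup>2 * c\<^sup>2 / 2)"
    by (intro mult_right_mono IH) auto
  also have "\<dots> = exp (l\<^sup>2 * c\<^sup>2 * real (card (insert a A)) / 2)"
    using insert by (simp add: mult_exp_exp algebra_simps add_divide_distrib)
  finally show ?case .
qed

theorem mcdiarmid_inequality: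
  fixes f :: "('a \<Rightarrow> 'b) \<Rightarrow> real"
  assumes "finite A" "A \<noteq> {}" "\<And>x. x \<in> A \<Longrightarrow> finite (set_pmf (p x))" "t > 0" "c > 0"
    "\<And>i h y z. i \<in> A \<Longrightarrow> \<bar>f (h(i:=y)) - f (h(i:=z))\<bar> \<le> c"
  shows "measure_pmf.prob (Pi_pmf A dflt p)
           {h. f h \<ge> measure_pmf.expectation (Pi_pmf A dflt p) f + t}
         \<le> exp (- t\<^sup>2 / (2 * c\<^sup>2 * real (card A)))"
proof -
  define n where "n = real (card A)"
  have n: "n > 0" using assms(1,2) by (simp add: n_def card_gt_0_iff)
  define l where "l = t / (c\<^sup>2 * n)"
  have l: "l > 0" using assms n by (simp add: l_def)
  define \<mu> where "\<mu> = measure_pmf.expectation (Pi_pmf A dflt p) f"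
  have fin: "finite (set_pmf (Pi_pmf A dflt p))" using assms by (intro finite_set_Pi_pmf) auto
  have "measure_pmf.prob (Pi_pmf A dflt p) {h. f h \<ge> \<mu> + t}
      = measure_pmf.prob (Pi_pmf A dflt p) {h. f h - \<mu> \<ge> t}"
    by (rule arg_cong[where f="measure_pmf.prob _"]) auto
  also have "\<dots> \<le> measure_pmf.expectation (Pi_pmf A dflt p) (\<lambda>h. exp (l * (f h - \<mu>))) / exp (l * t)"
    by (rule prob_ge_le_exp_moment[OF fin l])
  also have "\<dots> \<le> exp (l\<^sup>2 * c\<^sup>2 * n / 2) / exp (l * t)"
    unfolding \<mu>_def n_def using mcdiarmid_mgf_bound[of A p l f c dflt, OF assms(1,3) l assms(6)]
    by (intro divide_right_mono) auto
  also have "\<dots> = exp (l\<^sup>2 * c\<^sup>2 * n / 2 - l * t)" by (simp add: exp_diff)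
  also have "l\<^sup>2 * c\<^sup>2 * n / 2 - l * t = - t\<^sup>2 / (2 * c\<^sup>2 * n)"
    using n assms by (simp add: l_def field_simps power2_eq_square)
  finally show ?thesis unfolding \<mu>_def n_def .
qed

section \<open>The contraction principle for Rademacher averages\<close>

lemma abs_sum_mult_le:
  fixes w e :: "'i \<Rightarrow> real"
  assumes "\<And>i. i \<in> I \<Longrightarrow> \<bar>w i\<bar> \<le> B"
  shows "\<bar>\<Sum>i\<in>I. e i * w i\<bar> \<le> (\<Sum>i\<in>I. \<bar>e i\<bar> * B)"
proof -
  have "\<bar>\<Sum>i\<in>I. e i * w i\<bar> \<le> (\<Sum>i\<in>I. \<bar>e i * w i\<bar>)" by (rule sum_abs)
  also have "\<dots> \<le> (\<Sum>i\<in>I. \<bar>e i\<bar> * B)"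
    using assms by (intro sum_mono) (auto simp: abs_mult intro: mult_left_mono)
  finally show ?thesis .
qed

lemma cSUP_upper_abs_bounded:
  fixes f :: "'a \<Rightarrow> real"
  assumes "x \<in> D" "\<And>x. x \<in> D \<Longrightarrow> \<bar>f x\<bar> \<le> K"
  shows "f x \<le> (SUP x\<in>D. f x)"
  by (rule cSUP_upper[OF assms(1)], rule bdd_aboveI2[where M=K])
    (use assms(2) in \<open>auto simp: abs_le_iff\<close>)

lemma SUP_add_SUP_uminus_contraction:
  fixes u v R :: "'d \<Rightarrow> real"
  assumes D: "D \<noteq> {}" and bv: "\<And>x. x \<in> D \<Longrightarrow> \<bar>v x\<bar> \<le> B"
    and bR: "\<And>x. x \<in> D \<Longrightarrow> \<bar>R x\<bar> \<le> B"
    and lip: "\<And>x y. x \<in> D \<Longrightarrow> y \<in> D \<Longrightarrow> \<bar>u x - u y\<bar> \<le> \<bar>v x - v y\<bar>"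
  shows "(SUP x\<in>D. u x + R x) + (SUP x\<in>D. - u x + R x)
       \<le> (SUP x\<in>D. v x + R x) + (SUP x\<in>D. - v x + R x)"
proof -
  define S where "S = (SUP x\<in>D. v x + R x) + (SUP x\<in>D. - v x + R x)"
  have b1: "\<bar>v x + R x\<bar> \<le> 2*B" "\<bar>- v x + R x\<bar> \<le> 2*B" if "x \<in> D" for x
    using bv[OF that] bR[OF that] by auto
  have pairs: "u x + R x + (- u y + R y) \<le> S" if "x \<in> D" "y \<in> D" for x y
  proof -
    have "u x + R x + (- u y + R y) \<le> \<bar>v x - v y\<bar> + R x + R y" using lip[OF that] by auto
    also have "\<dots> \<le> S"
    proof (cases "v x \<ge> v y")
      case True
      have "v x + R x \<le> (SUP x\<in>D. v x + R x)" by (rule cSUP_upper_abs_bounded[OF that(1) b1(1)])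
      moreover have "- v y + R y \<le> (SUP x\<in>D. - v x + R x)"
        by (rule cSUP_upper_abs_bounded[OF that(2) b1(2)])
      ultimately show ?thesis using True by (simp add: S_def)
    next
      case False
      have "v y + R y \<le> (SUP x\<in>D. v x + R x)" by (rule cSUP_upper_abs_bounded[OF that(2) b1(1)])
      moreover have "- v x + R x \<le> (SUP x\<in>D. - v x + R x)"
        by (rule cSUP_upper_abs_bounded[OF that(1) b1(2)])
      ultimately show ?thesis using False by (simp add: S_def)
    qed
    finally show ?thesis .
  qed
  have "(SUP x\<in>D. u x + R x) \<le> S - (- u y + R y)" if "y \<in> D" for y
    using pairs[OF _ that] by (intro cSUP_least[OF D]) (simp add: algebra_simps)
  then have "(SUP y\<in>D. - u y + R y) \<le> S - (SUP x\<in>D. u x + R x)"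
    by (intro cSUP_least[OF D]) (auto simp: algebra_simps)
  then show ?thesis unfolding S_def by linarith
qed

definition rademacher :: "real pmf" where
  "rademacher = pmf_of_set {-1, 1}"

lemma set_pmf_rademacher: "set_pmf rademacher = {-1, 1}"
  unfolding rademacher_def by (simp add: set_pmf_of_set)

lemma pmf_rademacher_uminus: "pmf rademacher (- x) = pmf rademacher x"
  unfolding rademacher_def by (subst (1 2) pmf_of_set) (auto simp: indicator_def)

lemma rademacher_pmf_eq_Pi_pmf: "rademacher_pmf m = Pi_pmf {..<m} 0 (\<lambda>_. rademacher)"
  unfolding rademacher_pmf_def rademacher_def ..

lemma finite_set_rademacher_pmf: "finite (set_pmf (rademacher_pmf m))"
  unfolding rademacher_pmf_eq_Pi_pmf by (intro finite_set_Pi_pmf) (auto simp: set_pmf_rademacher)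

lemma set_rademacher_pmfD:
  "\<epsilon> \<in> set_pmf (rademacher_pmf m) \<Longrightarrow> i < m \<Longrightarrow> \<epsilon> i = 1 \<or> \<epsilon> i = -1"
  unfolding rademacher_pmf_eq_Pi_pmf
  by (subst (asm) set_Pi_pmf) (auto simp: PiE_dflt_def set_pmf_rademacher)

lemma pmf_rademacher_pmf_flip:
  assumes "j < m"
  shows "pmf (rademacher_pmf m) (\<epsilon>(j := - \<epsilon> j)) = pmf (rademacher_pmf m) \<epsilon>"
proof -
  have "(\<Prod>x\<in>{..<m}. pmf rademacher ((\<epsilon>(j := - \<epsilon> j)) x)) = (\<Prod>x\<in>{..<m}. pmf rademacher (\<epsilon> x))"
    by (intro prod.cong) (auto simp: pmf_rademacher_uminus)
  then show ?thesis using assms unfolding rademacher_pmf_eq_Pi_pmf by (auto simp: pmf_Pi)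
qed

lemma pmf_rademacher_pmf_uminus:
  "pmf (rademacher_pmf m) (\<lambda>i. - \<epsilon> i) = pmf (rademacher_pmf m) \<epsilon>"
proof -
  have "(\<Prod>x\<in>{..<m}. pmf rademacher (- \<epsilon> x)) = (\<Prod>x\<in>{..<m}. pmf rademacher (\<epsilon> x))"
    by (intro prod.cong) (auto simp: pmf_rademacher_uminus)
  then show ?thesis unfolding rademacher_pmf_eq_Pi_pmf by (auto simp: pmf_Pi)
qed

lemma expectation_rademacher_le_by_flip:
  fixes G G' :: "(nat \<Rightarrow> real) \<Rightarrow> real"
  assumes n: "n < m"
    and pointwise: "\<And>\<epsilon>. \<epsilon> \<in> set_pmf (rademacher_pmf m) \<Longrightarrow>
      G \<epsilon> + G (\<epsilon>(n := - \<epsilon> n)) \<le> G' \<epsilon> + G' (\<epsilon>(n := - \<epsilon> n))"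
  shows "measure_pmf.expectation (rademacher_pmf m) G \<le> measure_pmf.expectation (rademacher_pmf m) G'"
proof -
  define E where "E = rademacher_pmf m"
  have fin: "finite (set_pmf E)" unfolding E_def by (rule finite_set_rademacher_pmf)
  define flip where "flip \<epsilon> = \<epsilon>(n := - \<epsilon> n)" for \<epsilon> :: "nat \<Rightarrow> real"
  have flip_invariant: "measure_pmf.expectation E (\<lambda>\<epsilon>. F (flip \<epsilon>)) = measure_pmf.expectation E F"
    for F :: "_ \<Rightarrow> real"
  proof (rule expectation_involution_invariant)
    show "pmf E (flip \<epsilon>) = pmf E \<epsilon>" for \<epsilon>
      unfolding flip_def E_def by (rule pmf_rademacher_pmf_flip[OF n])
  qed (auto simp: flip_def)
  have "measure_pmf.expectation E G = measure_pmf.expectation E (\<lambda>\<epsilon>. G \<epsilon> + G (flip \<epsilon>)) / 2"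
    by (simp add: expectation_add_finite[OF fin] flip_invariant)
  also have "\<dots> \<le> measure_pmf.expectation E (\<lambda>\<epsilon>. G' \<epsilon> + G' (flip \<epsilon>)) / 2"
    using pointwise unfolding E_def flip_def
    by (intro divide_right_mono expectation_mono_finite[OF fin[unfolded E_def]]) auto
  also have "\<dots> = measure_pmf.expectation E G'"
    by (simp add: expectation_add_finite[OF fin] flip_invariant)
  finally show ?thesis unfolding E_def .
qed

lemma rademacher_contraction_step:
  fixes u v :: "'d \<Rightarrow> nat \<Rightarrow> real"
  assumes D: "D \<noteq> {}" and bu: "\<And>x i. \<bar>u x i\<bar> \<le> B" and bv: "\<And>x i. \<bar>v x i\<bar> \<le> B"
    and lip: "\<And>x y i. x \<in> D \<Longrightarrow> y \<in> D \<Longrightarrow> i < m \<Longrightarrow> \<bar>u x i - u y i\<bar> \<le> \<bar>v x i - v y i\<bar>"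
    and n: "n < m"
  shows "measure_pmf.expectation (rademacher_pmf m)
           (\<lambda>\<epsilon>. SUP x\<in>D. \<Sum>i<m. \<epsilon> i * (if i < n then v x i else u x i))
       \<le> measure_pmf.expectation (rademacher_pmf m)
           (\<lambda>\<epsilon>. SUP x\<in>D. \<Sum>i<m. \<epsilon> i * (if i < Suc n then v x i else u x i))"
proof -
  define R where "R \<epsilon> x = (\<Sum>i\<in>{..<m}-{n}. \<epsilon> i * (if i < n then v x i else u x i))" for \<epsilon> x
  define G where "G \<epsilon> = (SUP x\<in>D. \<epsilon> n * u x n + R \<epsilon> x)" for \<epsilon>
  define G' where "G' \<epsilon> = (SUP x\<in>D. \<epsilon> n * v x n + R \<epsilon> x)" for \<epsilon>
  have split_u: "(\<Sum>i<m. \<epsilon> i * (if i < n then v x i else u x i)) = \<epsilon> n * u x n + R \<epsilon> x" for \<epsilon> x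
    using n unfolding R_def by (subst sum.remove[of _ n]) auto
  have split_v: "(\<Sum>i<m. \<epsilon> i * (if i < Suc n then v x i else u x i)) = \<epsilon> n * v x n + R \<epsilon> x"
    for \<epsilon> x
  proof -
    have "(\<Sum>i\<in>{..<m}-{n}. \<epsilon> i * (if i < Suc n then v x i else u x i)) = R \<epsilon> x"
      unfolding R_def by (intro sum.cong) auto
    then show ?thesis using n by (subst sum.remove[of _ n]) auto
  qed
  have R_upd: "R (\<epsilon>(n := c)) x = R \<epsilon> x" for \<epsilon> x c
    unfolding R_def by (intro sum.cong) auto
  have "measure_pmf.expectation (rademacher_pmf m) G \<le> measure_pmf.expectation (rademacher_pmf m) G'"
  proof (rule expectation_rademacher_le_by_flip[OF n])
    fix \<epsilon> assume "\<epsilon> \<in> set_pmf (rademacher_pmf m)"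
    then have sign: "\<epsilon> n = 1 \<or> \<epsilon> n = -1" using set_rademacher_pmfD n by auto
    define K where "K = (\<Sum>i\<in>{..<m}-{n}. \<bar>\<epsilon> i\<bar> * B)"
    have R_bound: "\<bar>R \<epsilon> x\<bar> \<le> K" for x unfolding R_def K_def
      by (rule abs_sum_mult_le) (auto intro: bu bv)
    have "B \<ge> 0" using bu[of undefined 0] by auto
    then have "K \<ge> 0" unfolding K_def by (intro sum_nonneg) auto
    then have bounds: "\<bar>v x n\<bar> \<le> B + K" "\<bar>R \<epsilon> x\<bar> \<le> B + K" for x
      using bv[of x n] R_bound[of x] \<open>B \<ge> 0\<close> by linarith+
    have "(SUP x\<in>D. u x n + R \<epsilon> x) + (SUP x\<in>D. - u x n + R \<epsilon> x)
       \<le> (SUP x\<in>D. v x n + R \<epsilon> x) + (SUP x\<in>D. - v x n + R \<epsilon> x)"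
      by (rule SUP_add_SUP_uminus_contraction[OF D, where B="B + K"]) (use bounds lip n in auto)
    then show "G \<epsilon> + G (\<epsilon>(n := - \<epsilon> n)) \<le> G' \<epsilon> + G' (\<epsilon>(n := - \<epsilon> n))"
      using sign unfolding G_def G'_def by (auto simp: R_upd add.commute)
  qed
  then show ?thesis unfolding G_def G'_def split_u split_v .
qed

theorem rademacher_contraction:
  fixes u v :: "'d \<Rightarrow> nat \<Rightarrow> real"
  assumes D: "D \<noteq> {}" and bu: "\<And>x i. \<bar>u x i\<bar> \<le> B" and bv: "\<And>x i. \<bar>v x i\<bar> \<le> B"
    and lip: "\<And>x y i. x \<in> D \<Longrightarrow> y \<in> D \<Longrightarrow> i < m \<Longrightarrow> \<bar>u x i - u y i\<bar> \<le> \<bar>v x i - v y i\<bar>"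
  shows "measure_pmf.expectation (rademacher_pmf m) (\<lambda>\<epsilon>. SUP x\<in>D. \<Sum>i<m. \<epsilon> i * u x i)
       \<le> measure_pmf.expectation (rademacher_pmf m) (\<lambda>\<epsilon>. SUP x\<in>D. \<Sum>i<m. \<epsilon> i * v x i)"
proof -
  define H where "H n = measure_pmf.expectation (rademacher_pmf m)
           (\<lambda>\<epsilon>. SUP x\<in>D. \<Sum>i<m. \<epsilon> i * (if i < n then v x i else u x i))" for n
  have "H 0 \<le> H n" if "n \<le> m" for n
    using that
  proof (induction n)
    case (Suc n)
    then have "H n \<le> H (Suc n)"
      unfolding H_def by (intro rademacher_contraction_step[OF D bu bv lip]) auto
    then show ?case using Suc by auto
  qed simp
  moreover have "H m = measure_pmf.expectation (rademacher_pmf m) (\<lambda>\<epsilon>. SUP x\<in>D. \<Sum>i<m. \<epsilon> i * v x i)"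
    unfolding H_def by (intro arg_cong[where f="measure_pmf.expectation _"] ext SUP_cong sum.cong) auto
  moreover have "H 0 = measure_pmf.expectation (rademacher_pmf m) (\<lambda>\<epsilon>. SUP x\<in>D. \<Sum>i<m. \<epsilon> i * u x i)"
    unfolding H_def by simp
  ultimately show ?thesis by (metis order.refl)
qed

section \<open>Symmetrization\<close>

definition mix :: "(nat \<Rightarrow> real) \<Rightarrow> (nat \<Rightarrow> 'b) \<Rightarrow> (nat \<Rightarrow> 'b) \<Rightarrow> nat \<Rightarrow> 'b" where
  "mix \<epsilon> x y = (\<lambda>i. if \<epsilon> i = 1 then x i else y i)"

lemma pmf_pair_Pi_pmf_mix:
  assumes A: "finite A"
  shows "pmf (pair_pmf (Pi_pmf A dflt (\<lambda>_. P)) (Pi_pmf A dflt (\<lambda>_. P))) (mix \<epsilon> x y, mix \<epsilon> y x)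
       = pmf (pair_pmf (Pi_pmf A dflt (\<lambda>_. P)) (Pi_pmf A dflt (\<lambda>_. P))) (x, y)"
proof -
  define ok where "ok f = (\<forall>i. i \<notin> A \<longrightarrow> f i = dflt)" for f :: "nat \<Rightarrow> 'a"
  show ?thesis
  proof (cases "ok x \<and> ok y")
    case True
    then have ok_mix: "ok (mix \<epsilon> x y)" "ok (mix \<epsilon> y x)" by (auto simp: ok_def mix_def)
    have "(\<Prod>i\<in>A. pmf P (mix \<epsilon> x y i)) * (\<Prod>i\<in>A. pmf P (mix \<epsilon> y x i))
        = (\<Prod>i\<in>A. pmf P (mix \<epsilon> x y i) * pmf P (mix \<epsilon> y x i))" by (simp add: prod.distrib)
    also have "\<dots> = (\<Prod>i\<in>A. pmf P (x i) * pmf P (y i))"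
      by (intro prod.cong) (auto simp: mix_def)
    also have "\<dots> = (\<Prod>i\<in>A. pmf P (x i)) * (\<Prod>i\<in>A. pmf P (y i))" by (simp add: prod.distrib)
    finally show ?thesis using True ok_mix A by (simp add: pmf_pair pmf_Pi ok_def)
  next
    case False
    then obtain i where "i \<notin> A" "x i \<noteq> dflt \<or> y i \<noteq> dflt" by (auto simp: ok_def)
    then have "\<not> ok (mix \<epsilon> x y) \<or> \<not> ok (mix \<epsilon> y x)" by (auto simp: ok_def mix_def)
    then show ?thesis using False A by (auto simp: pmf_pair pmf_Pi ok_def)
  qed
qed

lemma expectation_pair_Pi_pmf_mix:
  fixes F :: "(nat \<Rightarrow> 'b) \<times> (nat \<Rightarrow> 'b) \<Rightarrow> real"
  assumes A: "finite A"
  shows "measure_pmf.expectation (pair_pmf (Pi_pmf A dflt (\<lambda>_. P)) (Pi_pmf A dflt (\<lambda>_. P)))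
            (\<lambda>p. F (mix \<epsilon> (fst p) (snd p), mix \<epsilon> (snd p) (fst p)))
       = measure_pmf.expectation (pair_pmf (Pi_pmf A dflt (\<lambda>_. P)) (Pi_pmf A dflt (\<lambda>_. P))) F"
  by (rule expectation_involution_invariant)
    (auto simp: mix_def fun_eq_iff pmf_pair_Pi_pmf_mix[OF A, simplified mix_def])

locale bounded_empirical_process =
  fixes P :: "nat pmf" and m :: nat and g :: "'d \<Rightarrow> nat \<Rightarrow> real"
  assumes finite_P: "finite (set_pmf P)" and m_pos: "m \<ge> 1" and g_bounded: "\<And>x k. \<bar>g x k\<bar> \<le> 1"
begin

definition sample :: "(nat \<Rightarrow> nat) pmf" where
  "sample = Pi_pmf {..<m} (0::nat) (\<lambda>_. P)"

definition mean :: "'d \<Rightarrow> real" where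
  "mean x = measure_pmf.expectation P (g x)"

definition emp_mean :: "(nat \<Rightarrow> nat) \<Rightarrow> 'd \<Rightarrow> real" where
  "emp_mean \<omega> x = (1 / real m) * (\<Sum>i<m. g x (\<omega> i))"

definition sup_deviation :: "'d set \<Rightarrow> (nat \<Rightarrow> nat) \<Rightarrow> real" where
  "sup_deviation D \<omega> = (SUP x\<in>D. mean x - emp_mean \<omega> x)"

definition sup_difference :: "'d set \<Rightarrow> (nat \<Rightarrow> nat) \<Rightarrow> (nat \<Rightarrow> nat) \<Rightarrow> real" where
  "sup_difference D \<omega> \<omega>' = (SUP x\<in>D. emp_mean \<omega>' x - emp_mean \<omega> x)"

definition rademacher_sup :: "'d set \<Rightarrow> (nat \<Rightarrow> real) \<Rightarrow> (nat \<Rightarrow> nat) \<Rightarrow> real" where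
  "rademacher_sup D \<epsilon> \<omega> = (SUP x\<in>D. \<Sum>i<m. \<epsilon> i * (g x (\<omega> i) / real m))"

lemma finite_set_sample: "finite (set_pmf sample)"
  unfolding sample_def by (intro finite_set_Pi_pmf) (auto simp: finite_P)

lemma abs_emp_mean_le: "\<bar>emp_mean \<omega> x\<bar> \<le> 1"
proof -
  have "\<bar>\<Sum>i<m. g x (\<omega> i)\<bar> \<le> (\<Sum>i<m. \<bar>g x (\<omega> i)\<bar>)" by (rule sum_abs)
  also have "\<dots> \<le> (\<Sum>i<m. 1)" by (intro sum_mono g_bounded)
  finally show ?thesis using m_pos by (simp add: emp_mean_def abs_mult divide_le_eq)
qed

lemma expectation_emp_mean: "measure_pmf.expectation sample (\<lambda>\<omega>. emp_mean \<omega> x) = mean x"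
proof -
  have "measure_pmf.expectation sample (\<lambda>\<omega>. emp_mean \<omega> x)
      = (1 / real m) * (\<Sum>i<m. measure_pmf.expectation sample (\<lambda>\<omega>. g x (\<omega> i)))"
    unfolding emp_mean_def by (simp add: expectation_sum_finite[OF finite_set_sample])
  also have "(\<Sum>i<m. measure_pmf.expectation sample (\<lambda>\<omega>. g x (\<omega> i))) = (\<Sum>i<m. mean x)"
    unfolding sample_def mean_def by (intro sum.cong refl expectation_Pi_pmf_component) auto
  finally show ?thesis using m_pos by simp
qed

lemma sup_deviation_le_expectation:
  assumes D: "D \<noteq> {}"
  shows "sup_deviation D \<omega> \<le> measure_pmf.expectation sample (\<lambda>\<omega>'. sup_difference D \<omega> \<omega>')"
  unfolding sup_deviation_def
proof (rule cSUP_least[OF D])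
  fix x assume x: "x \<in> D"
  have "mean x - emp_mean \<omega> x = measure_pmf.expectation sample (\<lambda>\<omega>'. emp_mean \<omega>' x - emp_mean \<omega> x)"
    by (subst Bochner_Integration.integral_diff)
       (auto simp: expectation_emp_mean intro: integrable_measure_pmf_finite[OF finite_set_sample])
  also have "\<dots> \<le> measure_pmf.expectation sample (\<lambda>\<omega>'. sup_difference D \<omega> \<omega>')"
    unfolding sup_difference_def
  proof (intro expectation_mono_finite[OF finite_set_sample] cSUP_upper_abs_bounded[OF x])
    fix \<omega>' y show "\<bar>emp_mean \<omega>' y - emp_mean \<omega> y\<bar> \<le> 2"
      using abs_emp_mean_le[of \<omega>' y] abs_emp_mean_le[of \<omega> y] by linarith
  qed
  finally show "mean x - emp_mean \<omega> x \<le> measure_pmf.expectation sample (\<lambda>\<omega>'. sup_difference D \<omega> \<omega>')" .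
qed

lemma abs_rademacher_sum_le: "\<bar>\<Sum>i<m. \<epsilon> i * (g x (\<omega> i) / real m)\<bar> \<le> (\<Sum>i<m. \<bar>\<epsilon> i\<bar> * 1)"
proof (rule abs_sum_mult_le)
  fix i
  have "\<bar>g x (\<omega> i)\<bar> \<le> 1" by (rule g_bounded)
  moreover have "real m \<ge> 1" using m_pos by simp
  ultimately show "\<bar>g x (\<omega> i) / real m\<bar> \<le> 1" by (simp add: abs_div divide_le_eq)
qed

lemma sup_difference_mix_le:
  assumes D: "D \<noteq> {}" and \<epsilon>: "\<epsilon> \<in> set_pmf (rademacher_pmf m)"
  shows "sup_difference D (mix \<epsilon> \<omega> \<omega>') (mix \<epsilon> \<omega>' \<omega>)
     \<le> rademacher_sup D \<epsilon> \<omega>' + rademacher_sup D (\<lambda>i. - \<epsilon> i) \<omega>"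
  unfolding sup_difference_def
proof (intro cSUP_least[OF D])
  fix x assume x: "x \<in> D"
  have "emp_mean (mix \<epsilon> \<omega>' \<omega>) x - emp_mean (mix \<epsilon> \<omega> \<omega>') x
      = (\<Sum>i<m. (g x (mix \<epsilon> \<omega>' \<omega> i) - g x (mix \<epsilon> \<omega> \<omega>' i)) / real m)"
    unfolding emp_mean_def by (simp add: diff_divide_distrib sum_divide_distrib sum_subtractf)
  also have "\<dots> = (\<Sum>i<m. \<epsilon> i * (g x (\<omega>' i) / real m) + - \<epsilon> i * (g x (\<omega> i) / real m))"
    using set_rademacher_pmfD[OF \<epsilon>]
    by (intro sum.cong refl) (force simp: mix_def field_simps)
  also have "\<dots> = (\<Sum>i<m. \<epsilon> i * (g x (\<omega>' i) / real m)) + (\<Sum>i<m. - \<epsilon> i * (g x (\<omega> i) / real m))"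
    by (rule sum.distrib)
  also have "\<dots> \<le> rademacher_sup D \<epsilon> \<omega>' + rademacher_sup D (\<lambda>i. - \<epsilon> i) \<omega>"
    unfolding rademacher_sup_def
    by (intro add_mono cSUP_upper_abs_bounded[OF x abs_rademacher_sum_le])
  finally show "emp_mean (mix \<epsilon> \<omega>' \<omega>) x - emp_mean (mix \<epsilon> \<omega> \<omega>') x
      \<le> rademacher_sup D \<epsilon> \<omega>' + rademacher_sup D (\<lambda>i. - \<epsilon> i) \<omega>" .
qed

lemma expectation_rademacher_sup_uminus:
  "measure_pmf.expectation (rademacher_pmf m) (\<lambda>\<epsilon>. rademacher_sup D (\<lambda>i. - \<epsilon> i) \<omega>)
   = measure_pmf.expectation (rademacher_pmf m) (\<lambda>\<epsilon>. rademacher_sup D \<epsilon> \<omega>)"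
  by (rule expectation_involution_invariant[where \<sigma>="\<lambda>\<epsilon> i. - \<epsilon> i"])
    (auto simp: pmf_rademacher_pmf_uminus)

theorem symmetrization:
  assumes D: "D \<noteq> {}"
  shows "measure_pmf.expectation sample (sup_deviation D)
     \<le> 2 * measure_pmf.expectation sample
            (\<lambda>\<omega>. measure_pmf.expectation (rademacher_pmf m) (\<lambda>\<epsilon>. rademacher_sup D \<epsilon> \<omega>))"
proof -
  define E where "E = rademacher_pmf m"
  have fin_E: "finite (set_pmf E)" unfolding E_def by (rule finite_set_rademacher_pmf)
  define S2 where "S2 = pair_pmf sample sample"
  have fin_S2: "finite (set_pmf S2)" unfolding S2_def using finite_set_sample by simp
  define W where "W p = sup_difference D (fst p) (snd p)" for p
  have "measure_pmf.expectation sample (sup_deviation D)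
      \<le> measure_pmf.expectation sample
           (\<lambda>\<omega>. measure_pmf.expectation sample (\<lambda>\<omega>'. sup_difference D \<omega> \<omega>'))"
    by (intro expectation_mono_finite[OF finite_set_sample] sup_deviation_le_expectation[OF D])
  also have "\<dots> = measure_pmf.expectation S2 W"
    unfolding S2_def W_def
    by (simp add: expectation_pair_pmf_finite[OF finite_set_sample finite_set_sample])
  also have "\<dots> = measure_pmf.expectation E (\<lambda>\<epsilon>. measure_pmf.expectation S2
                     (\<lambda>p. W (mix \<epsilon> (fst p) (snd p), mix \<epsilon> (snd p) (fst p))))"
    unfolding S2_def sample_def by (subst expectation_pair_Pi_pmf_mix) auto
  also have "\<dots> = measure_pmf.expectation S2 (\<lambda>p. measure_pmf.expectation E
                     (\<lambda>\<epsilon>. W (mix \<epsilon> (fst p) (snd p), mix \<epsilon> (snd p) (fst p))))"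
    by (rule expectation_swap_finite[OF fin_E fin_S2])
  also have "\<dots> \<le> measure_pmf.expectation S2 (\<lambda>p. measure_pmf.expectation E
                     (\<lambda>\<epsilon>. rademacher_sup D \<epsilon> (snd p) + rademacher_sup D (\<lambda>i. - \<epsilon> i) (fst p)))"
    unfolding W_def
    by (intro expectation_mono_finite[OF fin_S2] expectation_mono_finite[OF fin_E])
      (auto simp: E_def intro!: sup_difference_mix_le[OF D])
  also have "\<dots> = measure_pmf.expectation S2
                    (\<lambda>p. measure_pmf.expectation E (\<lambda>\<epsilon>. rademacher_sup D \<epsilon> (snd p))
                       + measure_pmf.expectation E (\<lambda>\<epsilon>. rademacher_sup D \<epsilon> (fst p)))"
    by (simp add: expectation_add_finite[OF fin_E] expectation_rademacher_sup_uminus[folded E_def])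
  also have "\<dots> = 2 * measure_pmf.expectation sample
                     (\<lambda>\<omega>. measure_pmf.expectation E (\<lambda>\<epsilon>. rademacher_sup D \<epsilon> \<omega>))"
    unfolding S2_def
    by (simp add: expectation_pair_pmf_finite[OF finite_set_sample finite_set_sample]
        expectation_add_finite[OF finite_set_sample])
  finally show ?thesis unfolding E_def .
qed

end

section \<open>Quadratic empirical processes and peeling\<close>

locale quadratic_empirical_process =
  fixes P :: "nat pmf" and m :: nat and a :: "'d \<Rightarrow> nat \<Rightarrow> real" and F :: "'d set"
    and s :: "(nat \<Rightarrow> nat) \<Rightarrow> (nat \<Rightarrow> real) \<Rightarrow> real" and R :: real
  assumes finite_P: "finite (set_pmf P)" and m_pos: "m \<ge> 1" and a_bounded: "\<And>x k. \<bar>a x k\<bar> \<le> 1"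
    and R_nonneg: "R \<ge> 0"
    and s_nonneg: "\<And>\<omega> \<epsilon>. s \<omega> \<epsilon> \<ge> 0"
    and rademacher_average_le: "\<And>\<omega> \<epsilon> x. \<omega> \<in> set_pmf (Pi_pmf {..<m} 0 (\<lambda>_. P))
        \<Longrightarrow> \<epsilon> \<in> set_pmf (rademacher_pmf m) \<Longrightarrow> x \<in> F
        \<Longrightarrow> (1 / real m) * (\<Sum>i<m. \<epsilon> i * a x (\<omega> i))
              \<le> s \<omega> \<epsilon> * sqrt (R * measure_pmf.expectation P (\<lambda>k. (a x k)\<^sup>2))"
begin

sublocale bounded_empirical_process P m "\<lambda>x k. (a x k)\<^sup>2"
proof
  show "\<bar>(a x k)\<^sup>2\<bar> \<le> 1" for x k
    using power_mono[OF a_bounded[of x k], of 2] by (simp add: power2_abs)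
qed (use finite_P m_pos in auto)

definition theta :: real where
  "theta = measure_pmf.expectation sample
    (\<lambda>\<omega>. measure_pmf.expectation (rademacher_pmf m) (\<lambda>\<epsilon>. s \<omega> \<epsilon>))"

definition sublevel :: "real \<Rightarrow> 'd set" where
  "sublevel T = {x \<in> F. mean x \<le> T}"

lemma mean_nonneg: "0 \<le> mean x" and mean_le_1: "mean x \<le> 1"
proof -
  have "measure_pmf.expectation P (\<lambda>_. 0::real) \<le> mean x" unfolding mean_def
    by (intro expectation_mono_finite[OF finite_P]) auto
  then show "0 \<le> mean x" by simp
  have "mean x \<le> measure_pmf.expectation P (\<lambda>_. 1::real)" unfolding mean_def
    using g_bounded by (intro expectation_mono_finite[OF finite_P]) (auto simp: abs_le_iff)
  then show "mean x \<le> 1" by simp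
qed

lemma abs_mean_minus_emp_mean_le: "\<bar>mean x - emp_mean \<omega> x\<bar> \<le> 2"
  using mean_nonneg[of x] mean_le_1[of x] abs_emp_mean_le[of \<omega> x] by auto

text \<open>Contraction applies because \<open>t \<mapsto> t\<^sup>2\<close> is \<open>2\<close>-Lipschitz on \<open>[-1, 1]\<close>.\<close>

lemma rademacher_sup_contraction:
  assumes D: "D \<noteq> {}"
  shows "measure_pmf.expectation (rademacher_pmf m) (\<lambda>\<epsilon>. rademacher_sup D \<epsilon> \<omega>)
     \<le> measure_pmf.expectation (rademacher_pmf m)
          (\<lambda>\<epsilon>. SUP x\<in>D. \<Sum>i<m. \<epsilon> i * (2 * a x (\<omega> i) / real m))"
  unfolding rademacher_sup_def
proof (rule rademacher_contraction[OF D, where B=2])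
  have m: "real m \<ge> 1" using m_pos by simp
  show "\<bar>(a x (\<omega> i))\<^sup>2 / real m\<bar> \<le> 2" for x i
    using g_bounded[of x "\<omega> i"] m by (simp add: abs_div divide_le_eq)
  show "\<bar>2 * a x (\<omega> i) / real m\<bar> \<le> 2" for x i
    using a_bounded[of x "\<omega> i"] m by (simp add: abs_div divide_le_eq abs_mult)
  show "\<bar>(a x (\<omega> i))\<^sup>2 / real m - (a y (\<omega> i))\<^sup>2 / real m\<bar>
      \<le> \<bar>2 * a x (\<omega> i) / real m - 2 * a y (\<omega> i) / real m\<bar>" for x y i
  proof -
    define u v where "u = a x (\<omega> i)" and "v = a y (\<omega> i)"
    have "\<bar>u\<^sup>2 - v\<^sup>2\<bar> = \<bar>u - v\<bar> * \<bar>u + v\<bar>"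
      by (simp add: power2_eq_square abs_mult[symmetric] algebra_simps)
    also have "\<dots> \<le> \<bar>u - v\<bar> * 2"
      using a_bounded[of x "\<omega> i"] a_bounded[of y "\<omega> i"] by (intro mult_left_mono) (auto simp: u_def v_def)
    finally have "\<bar>u\<^sup>2 - v\<^sup>2\<bar> \<le> \<bar>2 * u - 2 * v\<bar>" by (auto simp: abs_if)
    then show ?thesis using m unfolding u_def v_def
      by (simp add: diff_divide_distrib[symmetric] abs_div divide_right_mono)
  qed
qed

lemma expectation_rademacher_sup_le:
  assumes T: "T > 0" and D: "sublevel T \<noteq> {}" and \<omega>: "\<omega> \<in> set_pmf sample"
  shows "measure_pmf.expectation (rademacher_pmf m) (\<lambda>\<epsilon>. rademacher_sup (sublevel T) \<epsilon> \<omega>)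
     \<le> 2 * sqrt (R * T) * measure_pmf.expectation (rademacher_pmf m) (\<lambda>\<epsilon>. s \<omega> \<epsilon>)"
proof -
  have "measure_pmf.expectation (rademacher_pmf m)
          (\<lambda>\<epsilon>. SUP x\<in>sublevel T. \<Sum>i<m. \<epsilon> i * (2 * a x (\<omega> i) / real m))
     \<le> measure_pmf.expectation (rademacher_pmf m) (\<lambda>\<epsilon>. 2 * sqrt (R * T) * s \<omega> \<epsilon>)"
  proof (intro expectation_mono_finite[OF finite_set_rademacher_pmf] cSUP_least[OF D])
    fix \<epsilon> x assume \<epsilon>: "\<epsilon> \<in> set_pmf (rademacher_pmf m)" and x: "x \<in> sublevel T"
    have "(\<Sum>i<m. \<epsilon> i * (2 * a x (\<omega> i) / real m)) = 2 * ((1 / real m) * (\<Sum>i<m. \<epsilon> i * a x (\<omega> i)))"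
      by (simp add: sum_distrib_left sum_divide_distrib mult_ac)
    also have "\<dots> \<le> 2 * (s \<omega> \<epsilon> * sqrt (R * mean x))"
      using rademacher_average_le[of \<omega> \<epsilon> x] \<omega> \<epsilon> x
      by (simp add: sample_def mean_def sublevel_def)
    also have "\<dots> \<le> 2 * (s \<omega> \<epsilon> * sqrt (R * T))"
      using x R_nonneg s_nonneg[of \<omega> \<epsilon>]
      by (intro mult_left_mono real_sqrt_le_mono) (auto simp: sublevel_def intro: mult_left_mono)
    finally show "(\<Sum>i<m. \<epsilon> i * (2 * a x (\<omega> i) / real m)) \<le> 2 * sqrt (R * T) * s \<omega> \<epsilon>"
      by (simp add: mult_ac)
  qed
  then show ?thesis using rademacher_sup_contraction[OF D, of \<omega>] by simp
qed

lemma expectation_sup_deviation_le: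
  assumes T: "T > 0" and D: "sublevel T \<noteq> {}"
  shows "measure_pmf.expectation sample (sup_deviation (sublevel T)) \<le> 4 * sqrt (R * T) * theta"
proof -
  have "measure_pmf.expectation sample (sup_deviation (sublevel T))
      \<le> 2 * measure_pmf.expectation sample (\<lambda>\<omega>.
              measure_pmf.expectation (rademacher_pmf m) (\<lambda>\<epsilon>. rademacher_sup (sublevel T) \<epsilon> \<omega>))"
    by (rule symmetrization[OF D])
  also have "\<dots> \<le> 2 * measure_pmf.expectation sample (\<lambda>\<omega>.
              2 * sqrt (R * T) * measure_pmf.expectation (rademacher_pmf m) (\<lambda>\<epsilon>. s \<omega> \<epsilon>))"
    by (intro mult_left_mono expectation_mono_finite[OF finite_set_sample]
        expectation_rademacher_sup_le[OF T D]) auto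
  also have "\<dots> = 4 * sqrt (R * T) * theta" by (simp add: theta_def)
  finally show ?thesis .
qed

lemma sup_deviation_update_le:
  assumes D: "sublevel T \<noteq> {}" and i: "i < m"
  shows "sup_deviation (sublevel T) (h(i:=y)) \<le> sup_deviation (sublevel T) (h(i:=z)) + 1 / real m"
  unfolding sup_deviation_def
proof (rule cSUP_least[OF D])
  fix x assume x: "x \<in> sublevel T"
  have sum_upd: "(\<Sum>j<m. (a x ((h(i:=w)) j))\<^sup>2) = (a x w)\<^sup>2 + (\<Sum>j\<in>{..<m}-{i}. (a x (h j))\<^sup>2)" for w
    using i by (subst sum.remove[of _ i]) (auto intro!: sum.cong)
  have "emp_mean (h(i:=z)) x - emp_mean (h(i:=y)) x = ((a x z)\<^sup>2 - (a x y)\<^sup>2) / real m"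
    unfolding emp_mean_def sum_upd by (simp add: add_divide_distrib diff_divide_distrib)
  also have "\<dots> \<le> 1 / real m"
  proof (rule divide_right_mono)
    show "(a x z)\<^sup>2 - (a x y)\<^sup>2 \<le> 1"
      using g_bounded[of x z] zero_le_power2[of "a x y"] by linarith
  qed simp
  finally have "mean x - emp_mean (h(i:=y)) x \<le> (mean x - emp_mean (h(i:=z)) x) + 1 / real m"
    by simp
  also have "mean x - emp_mean (h(i:=z)) x \<le> (SUP x\<in>sublevel T. mean x - emp_mean (h(i:=z)) x)"
    by (rule cSUP_upper_abs_bounded[OF x abs_mean_minus_emp_mean_le])
  finally show "mean x - emp_mean (h(i:=y)) x
      \<le> (SUP x\<in>sublevel T. mean x - emp_mean (h(i:=z)) x) + 1 / real m"
    by simp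
qed

lemma sup_deviation_concentration:
  assumes T: "T > 0" and D: "sublevel T \<noteq> {}"
  shows "measure_pmf.prob sample {\<omega>. sup_deviation (sublevel T) \<omega>
            \<ge> measure_pmf.expectation sample (sup_deviation (sublevel T)) + T / 8}
         \<le> exp (- real m * T\<^sup>2 / 128)"
proof -
  have "measure_pmf.prob sample {\<omega>. sup_deviation (sublevel T) \<omega>
            \<ge> measure_pmf.expectation sample (sup_deviation (sublevel T)) + T / 8}
      \<le> exp (- (T/8)\<^sup>2 / (2 * (1 / real m)\<^sup>2 * real (card {..<m})))"
    unfolding sample_def
  proof (rule mcdiarmid_inequality)
    show "{..<m} \<noteq> {}" using m_pos by (auto simp: lessThan_empty_iff)
    show "\<bar>sup_deviation (sublevel T) (h(i := y)) - sup_deviation (sublevel T) (h(i := z))\<bar>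
        \<le> 1 / real m" if "i \<in> {..<m}" for i h y z
      using sup_deviation_update_le[OF D, of i h y z] sup_deviation_update_le[OF D, of i h z y] that
      by auto
  qed (use T m_pos finite_P in auto)
  also have "- (T/8)\<^sup>2 / (2 * (1 / real m)\<^sup>2 * real (card {..<m})) = - real m * T\<^sup>2 / 128"
    using m_pos by (simp add: field_simps power2_eq_square)
  finally show ?thesis .
qed

end

lemma two_plus_two_mult_le_four_power: "l \<ge> 1 \<Longrightarrow> 2 + 2 * real l \<le> (4::real) ^ l"
proof (induction l)
  case (Suc l)
  then show ?case by (cases "l = 0") auto
qed simp

lemma sum_half_powers: "(\<Sum>l=1..L. (1/2::real) ^ l) = 1 - (1/2) ^ L"
  by (induction L) (auto simp: sum.atLeast_Suc_atMost_Suc_shift)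

lemma prob_UN_le_of_half_powers:
  fixes N :: real
  assumes N: "N > 0" and B: "\<And>l. l \<ge> 1 \<Longrightarrow> measure_pmf.prob M (B l) \<le> (1 / N) * (1/2) ^ l"
  shows "measure_pmf.prob M (\<Union>l\<in>{1..L}. B l) \<le> 1 / N"
proof -
  have "measure_pmf.prob M (\<Union>l\<in>{1..L}. B l) \<le> (\<Sum>l\<in>{1..L}. measure_pmf.prob M (B l))"
    by (rule measure_pmf.finite_measure_subadditive_finite) auto
  also have "\<dots> \<le> (\<Sum>l\<in>{1..L}. (1 / N) * (1/2) ^ l)" by (intro sum_mono B) auto
  also have "\<dots> = (1 / N) * (1 - (1/2) ^ L)"
    by (simp only: sum_distrib_left[symmetric] sum_half_powers)
  also have "\<dots> \<le> 1 / N"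
    using N by (intro mult_left_le) auto
  finally show ?thesis .
qed

text \<open>The shell thresholds \<open>2\<^sup>l \<nu>\<close> make the McDiarmid exponent grow like \<open>4\<^sup>l\<close>, which beats
  the factor \<open>2\<^sup>l\<close> needed for a summable union bound.\<close>

lemma peeling_tail_bound:
  fixes N :: real and m l :: nat
  defines "\<nu> \<equiv> sqrt (64 * ln N / (ln 2 * real m))"
  assumes N: "N \<ge> 3" and m: "m \<ge> 1" and l: "l \<ge> 1"
  shows "exp (- real m * (2 ^ l * \<nu>)\<^sup>2 / 128) \<le> (1 / N) * (1/2) ^ l"
proof -
  have lnN: "ln N > 0" "ln 2 \<le> ln N" using N by auto
  have ln2: "ln 2 > (0::real)" by simp
  have "64 * ln N / (ln 2 * real m) > 0" by (intro divide_pos_pos mult_pos_pos lnN(1) ln2) (use m in auto)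
  then have \<nu>2: "\<nu>\<^sup>2 = 64 * ln N / (ln 2 * real m)" unfolding \<nu>_def by simp
  have p4: "(2::real) ^ (l * 2) = 4 ^ l" by (subst mult.commute) (simp add: power_mult)
  have "real m * (2 ^ l * \<nu>)\<^sup>2 / 128 = 4 ^ l * ln N / (2 * ln 2)"
    using m ln2 p4 by (simp add: power_mult_distrib \<nu>2 power_mult[symmetric] field_simps)
  moreover have "ln N + real l * ln 2 \<le> 4 ^ l * ln N / (2 * ln 2)"
  proof -
    have "real l * ln 2 \<le> real l * ln N" using lnN by (intro mult_left_mono) auto
    then have "ln N + real l * ln 2 \<le> (1 + real l) * ln N" by (simp add: algebra_simps)
    also have "\<dots> \<le> (4 ^ l / 2) * ln N"
      using two_plus_two_mult_le_four_power[OF l] lnN by (intro mult_right_mono) auto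
    also have "\<dots> \<le> 4 ^ l * ln N / (2 * ln 2)"
      using ln_2_less_1 ln2 lnN by (simp add: field_simps mult_left_mono)
    finally show ?thesis .
  qed
  moreover have "- real m * (2 ^ l * \<nu>)\<^sup>2 / 128 = - (real m * (2 ^ l * \<nu>)\<^sup>2 / 128)"
    by simp
  ultimately have "exp (- real m * (2 ^ l * \<nu>)\<^sup>2 / 128) \<le> exp (- (ln N + real l * ln 2))"
    by (subst exp_le_cancel_iff) linarith
  also have "\<dots> = exp (- ln N) / exp (real l * ln 2)"
    by (simp add: exp_diff[symmetric])
  also have "\<dots> = (1 / N) * (1/2) ^ l"
    using N by (simp add: exp_minus exp_of_nat_mult inverse_eq_divide power_one_over)
  finally show ?thesis .
qed

lemma dyadic_shell_exists:
  fixes q \<nu> :: real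
  assumes "\<nu> \<le> q" "q \<le> 2 ^ L * \<nu>" "L \<ge> 1"
  shows "\<exists>l\<in>{1..L}. 2 ^ l * \<nu> / 2 \<le> q \<and> q \<le> 2 ^ l * \<nu>"
proof -
  obtain L' where L': "L = Suc L'" using assms(3) by (cases L) auto
  define k where "k = (LEAST k. q \<le> 2 ^ Suc k * \<nu>)"
  have up: "q \<le> 2 ^ Suc k * \<nu>" and "k \<le> L'"
    unfolding k_def using assms(2) L' by (auto intro: LeastI Least_le)
  moreover have "2 ^ Suc k * \<nu> / 2 \<le> q"
  proof (cases k)
    case (Suc k')
    then have "\<not> q \<le> 2 ^ Suc k' * \<nu>" using not_less_Least[of k' "\<lambda>k. q \<le> 2 ^ Suc k * \<nu>"]
      by (simp add: k_def)
    then have "2 ^ Suc k' * \<nu> \<le> q" by simp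
    then show ?thesis using Suc by (simp add: mult_ac)
  qed (use assms(1) in simp)
  ultimately show ?thesis using L' by (intro bexI[of _ "Suc k"]) auto
qed

context quadratic_empirical_process
begin

lemma emp_mean_ge_on_shell:
  assumes x: "x \<in> F" and T: "T > 0" and low: "T / 2 \<le> mean x" and up: "mean x \<le> T"
    and typical: "sup_deviation (sublevel T) \<omega>
        < measure_pmf.expectation sample (sup_deviation (sublevel T)) + T / 8"
  shows "emp_mean \<omega> x \<ge> 1/2 * mean x - 32 * R * theta\<^sup>2"
proof -
  have x_in: "x \<in> sublevel T" using x up by (simp add: sublevel_def)
  have amgm: "4 * u * w \<le> u\<^sup>2 / 8 + 32 * w\<^sup>2" for u w :: real
    using zero_le_power2[of "u - 16 * w"] by (simp add: power2_eq_square algebra_simps)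
  have "mean x - emp_mean \<omega> x \<le> sup_deviation (sublevel T) \<omega>"
    unfolding sup_deviation_def by (rule cSUP_upper_abs_bounded[OF x_in abs_mean_minus_emp_mean_le])
  also have "\<dots> < 4 * sqrt (R * T) * theta + T / 8"
    using typical expectation_sup_deviation_le[OF T] x_in by fastforce
  also have "4 * sqrt (R * T) * theta = 4 * sqrt T * (sqrt R * theta)"
    by (simp add: real_sqrt_mult)
  also have "\<dots> \<le> (sqrt T)\<^sup>2 / 8 + 32 * (sqrt R * theta)\<^sup>2" by (rule amgm)
  also have "\<dots> = T / 8 + 32 * R * theta\<^sup>2"
    using T R_nonneg by (simp add: power_mult_distrib)
  finally show ?thesis using low by linarith
qed

theorem emp_mean_lower_bound_whp:
  fixes N :: real
  assumes N: "N \<ge> 3" and mean_ge: "\<And>x. x \<in> F \<Longrightarrow> mean x \<ge> sqrt (64 * ln N / (ln 2 * real m))"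
  shows "measure_pmf.prob sample {\<omega>. \<forall>x\<in>F. emp_mean \<omega> x \<ge> 1/2 * mean x - 32 * R * theta\<^sup>2}
    \<ge> 1 - 1 / N"
proof -
  define \<nu> where "\<nu> = sqrt (64 * ln N / (ln 2 * real m))"
  have "\<nu> > 0" unfolding \<nu>_def using N m_pos by (intro real_sqrt_gt_zero divide_pos_pos mult_pos_pos) auto
  obtain n where "1 / \<nu> < 2 ^ n" using real_arch_pow[of "2::real"] by auto
  define L where "L = Suc n"
  have L: "1 \<le> L" "1 \<le> 2 ^ L * \<nu>"
    using \<open>1 / \<nu> < 2 ^ n\<close> \<open>\<nu> > 0\<close> by (auto simp: L_def field_simps)
  define T where "T l = 2 ^ l * \<nu>" for l :: nat
  define bad where "bad l = (if sublevel (T l) = {} then {} else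
      {\<omega>. sup_deviation (sublevel (T l)) \<omega>
            \<ge> measure_pmf.expectation sample (sup_deviation (sublevel (T l))) + T l / 8})" for l
  have T_pos: "T l > 0" for l unfolding T_def using \<open>\<nu> > 0\<close> by simp
  have good: "UNIV - (\<Union>l\<in>{1..L}. bad l)
      \<subseteq> {\<omega>. \<forall>x\<in>F. emp_mean \<omega> x \<ge> 1/2 * mean x - 32 * R * theta\<^sup>2}"
  proof safe
    fix \<omega> x assume \<omega>: "\<omega> \<notin> (\<Union>l\<in>{1..L}. bad l)" and x: "x \<in> F"
    obtain l where l: "l \<in> {1..L}" "T l / 2 \<le> mean x" "mean x \<le> T l"
      using dyadic_shell_exists[OF mean_ge[OF x, folded \<nu>_def] order_trans[OF mean_le_1 L(2)] L(1)]
      unfolding T_def by blast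
    then have "sublevel (T l) \<noteq> {}" using x by (auto simp: sublevel_def)
    moreover have "\<omega> \<notin> bad l" using \<omega> l(1) by blast
    ultimately have "sup_deviation (sublevel (T l)) \<omega>
        < measure_pmf.expectation sample (sup_deviation (sublevel (T l))) + T l / 8"
      by (simp add: bad_def not_le)
    then show "emp_mean \<omega> x \<ge> 1/2 * mean x - 32 * R * theta\<^sup>2"
      by (rule emp_mean_ge_on_shell[OF x T_pos l(2,3)])
  qed
  have bad_prob: "measure_pmf.prob sample (bad l) \<le> (1 / N) * (1/2) ^ l" if "l \<ge> 1" for l
  proof (cases "sublevel (T l) = {}")
    case False
    then have "measure_pmf.prob sample (bad l) \<le> exp (- real m * (T l)\<^sup>2 / 128)"
      using sup_deviation_concentration[OF T_pos False] by (simp add: bad_def)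
    also have "\<dots> \<le> (1 / N) * (1/2) ^ l"
      unfolding T_def \<nu>_def by (rule peeling_tail_bound[OF N m_pos that])
    finally show ?thesis .
  qed (use N in \<open>simp add: bad_def\<close>)
  have "measure_pmf.prob sample (\<Union>l\<in>{1..L}. bad l) \<le> 1 / N"
    using N by (intro prob_UN_le_of_half_powers bad_prob) auto
  then have "1 - 1 / N \<le> measure_pmf.prob sample (UNIV - (\<Union>l\<in>{1..L}. bad l))"
    using measure_pmf.prob_compl[of "\<Union>l\<in>{1..L}. bad l" sample] by simp
  also have "\<dots> \<le> measure_pmf.prob sample {\<omega>. \<forall>x\<in>F. emp_mean \<omega> x \<ge> 1/2 * mean x - 32 * R * theta\<^sup>2}"
    by (rule measure_pmf.finite_measure_mono[OF good]) simp
  finally show ?thesis .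
qed

end

section \<open>Trace duality\<close>

lemma minner_eq_Re_Im:
  "minner n1 n2 X Y = (\<Sum>i<n1. \<Sum>j<n2. Re (X i j) * Re (Y i j) + Im (X i j) * Im (Y i j))"
  unfolding minner_def by (simp add: Re_sum)

lemma minner_commute: "minner n1 n2 X Y = minner n1 n2 Y X"
  unfolding minner_eq_Re_Im by (simp add: mult.commute)

lemma minner_sum_right:
  "minner n1 n2 X (\<lambda>i j. \<Sum>k\<in>K. complex_of_real (c k) * Y k i j) = (\<Sum>k\<in>K. c k * minner n1 n2 X (Y k))"
proof -
  define t where "t k i j = c k * (Re (X i j) * Re (Y k i j) + Im (X i j) * Im (Y k i j))" for k i j
  have "minner n1 n2 X (\<lambda>i j. \<Sum>k\<in>K. complex_of_real (c k) * Y k i j) = (\<Sum>i<n1. \<Sum>j<n2. \<Sum>k\<in>K. t k i j)"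
    unfolding minner_eq_Re_Im t_def
    by (intro sum.cong refl)
      (simp add: Re_sum Im_sum sum_distrib_left sum.distrib[symmetric] algebra_simps)
  also have "\<dots> = (\<Sum>k\<in>K. \<Sum>i<n1. \<Sum>j<n2. t k i j)"
    by (subst sum.swap, rule sum.cong[OF refl], rule sum.swap)
  also have "\<dots> = (\<Sum>k\<in>K. c k * minner n1 n2 X (Y k))"
    unfolding minner_eq_Re_Im t_def by (simp add: sum_distrib_left)
  finally show ?thesis .
qed

lemma minner_sum_left:
  "minner n1 n2 (\<lambda>i j. \<Sum>k\<in>K. complex_of_real (c k) * Y k i j) X = (\<Sum>k\<in>K. c k * minner n1 n2 (Y k) X)"
  by (subst minner_commute) (simp add: minner_sum_right minner_commute)

lemma minner_scale_right: "minner n1 n2 X (\<lambda>i j. complex_of_real c * Y i j) = c * minner n1 n2 X Y"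
  unfolding minner_eq_Re_Im by (simp add: sum_distrib_left algebra_simps)

definition vec_ball :: "nat \<Rightarrow> (nat \<Rightarrow> complex) set" where
  "vec_ball n2 = {v. (\<Sum>j<n2. (cmod (v j))\<^sup>2) \<le> 1}"

definition mat_vec_norm :: "nat \<Rightarrow> nat \<Rightarrow> cmat \<Rightarrow> (nat \<Rightarrow> complex) \<Rightarrow> real" where
  "mat_vec_norm n1 n2 X v = sqrt (\<Sum>i<n1. (cmod (\<Sum>j<n2. X i j * v j))\<^sup>2)"

lemma spec_norm_eq_SUP: "spec_norm n1 n2 X = (SUP v\<in>vec_ball n2. mat_vec_norm n1 n2 X v)"
  unfolding spec_norm_def vec_ball_def mat_vec_norm_def ..

lemma zero_in_vec_ball: "(\<lambda>_. 0) \<in> vec_ball n2"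
  by (simp add: vec_ball_def)

lemma norm_le_1_of_vec_ball: "v \<in> vec_ball n2 \<Longrightarrow> j < n2 \<Longrightarrow> cmod (v j) \<le> 1"
proof -
  assume v: "v \<in> vec_ball n2" and j: "j < n2"
  have "(cmod (v j))\<^sup>2 \<le> (\<Sum>j<n2. (cmod (v j))\<^sup>2)" using j by (intro member_le_sum) auto
  also have "\<dots> \<le> 1" using v by (simp add: vec_ball_def)
  finally show ?thesis by (simp add: power_le_one_iff abs_le_iff)
qed

lemma mat_vec_norm_le_abs_sum:
  assumes v: "v \<in> vec_ball n2"
  shows "mat_vec_norm n1 n2 X v \<le> sqrt (\<Sum>i<n1. (\<Sum>j<n2. cmod (X i j))\<^sup>2)"
proof -
  have "cmod (\<Sum>j<n2. X i j * v j) \<le> (\<Sum>j<n2. cmod (X i j))" for i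
  proof -
    have "cmod (\<Sum>j<n2. X i j * v j) \<le> (\<Sum>j<n2. cmod (X i j * v j))" by (rule norm_sum)
    also have "\<dots> \<le> (\<Sum>j<n2. cmod (X i j))"
      using norm_le_1_of_vec_ball[OF v] by (intro sum_mono) (auto simp: norm_mult intro: mult_left_le)
    finally show ?thesis .
  qed
  then show ?thesis unfolding mat_vec_norm_def
    by (intro real_sqrt_le_mono sum_mono power_mono) auto
qed

lemma mat_vec_norm_le_spec_norm: "v \<in> vec_ball n2 \<Longrightarrow> mat_vec_norm n1 n2 X v \<le> spec_norm n1 n2 X"
  unfolding spec_norm_eq_SUP
  by (rule cSUP_upper, assumption, rule bdd_aboveI2, rule mat_vec_norm_le_abs_sum)

lemma spec_norm_nonneg: "0 \<le> spec_norm n1 n2 X"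
  using mat_vec_norm_le_spec_norm[OF zero_in_vec_ball, of n1 n2 X] by (simp add: mat_vec_norm_def)

lemma norm_entry_le_spec_norm:
  assumes Y: "Y \<in> mats n1 n2"
  shows "cmod (Y i j) \<le> spec_norm n1 n2 Y"
proof (cases "i < n1 \<and> j < n2")
  case True
  define v where "v = (\<lambda>j'. if j' = j then (1::complex) else 0)"
  have "(\<Sum>j'<n2. (cmod (v j'))\<^sup>2) = (\<Sum>j'<n2. if j' = j then 1 else 0)"
    by (intro sum.cong) (auto simp: v_def)
  then have v: "v \<in> vec_ball n2" using True by (simp add: vec_ball_def)
  have "(\<Sum>j'<n2. Y i' j' * v j') = Y i' j" for i'
    using True by (simp add: v_def if_distrib sum.delta cong: if_cong)
  then have "mat_vec_norm n1 n2 Y v = sqrt (\<Sum>i'<n1. (cmod (Y i' j))\<^sup>2)"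
    by (simp add: mat_vec_norm_def)
  also have "\<dots> \<ge> sqrt ((cmod (Y i j))\<^sup>2)"
    using True by (intro real_sqrt_le_mono member_le_sum) auto
  finally have "cmod (Y i j) \<le> mat_vec_norm n1 n2 Y v" by simp
  also have "\<dots> \<le> spec_norm n1 n2 Y" by (rule mat_vec_norm_le_spec_norm[OF v])
  finally show ?thesis .
next
  case False
  then have "Y i j = 0" using Y by (auto simp: mats_def)
  then show ?thesis using spec_norm_nonneg[of n1 n2 Y] by simp
qed

lemma spec_norm_scale_le:
  assumes c: "c \<ge> 0"
  shows "spec_norm n1 n2 (\<lambda>i j. complex_of_real c * Y i j) \<le> c * spec_norm n1 n2 Y"
  unfolding spec_norm_eq_SUP[of n1 n2 "\<lambda>i j. complex_of_real c * Y i j"]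
proof (rule cSUP_least)
  show "vec_ball n2 \<noteq> {}" using zero_in_vec_ball by auto
  fix v assume v: "v \<in> vec_ball n2"
  have "(cmod (\<Sum>j<n2. complex_of_real c * Y i j * v j))\<^sup>2 = c\<^sup>2 * (cmod (\<Sum>j<n2. Y i j * v j))\<^sup>2" for i
    using c by (simp add: sum_distrib_left[symmetric] mult.assoc norm_mult power_mult_distrib)
  then have "mat_vec_norm n1 n2 (\<lambda>i j. complex_of_real c * Y i j) v = c * mat_vec_norm n1 n2 Y v"
    using c by (simp add: mat_vec_norm_def sum_distrib_left[symmetric] real_sqrt_mult)
  also have "\<dots> \<le> c * spec_norm n1 n2 Y"
    using c by (intro mult_left_mono mat_vec_norm_le_spec_norm[OF v]) auto
  finally show "mat_vec_norm n1 n2 (\<lambda>i j. complex_of_real c * Y i j) v \<le> c * spec_norm n1 n2 Y" .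
qed

lemma minner_le_nuc_norm:
  assumes Y: "Y \<in> mats n1 n2" "spec_norm n1 n2 Y \<le> 1"
  shows "minner n1 n2 X Y \<le> nuc_norm n1 n2 X"
  unfolding nuc_norm_def
proof (rule cSUP_upper)
  show "bdd_above ((\<lambda>Y. minner n1 n2 X Y) ` {Y \<in> mats n1 n2. spec_norm n1 n2 Y \<le> 1})"
  proof (rule bdd_aboveI2[where M="\<Sum>i<n1. \<Sum>j<n2. cmod (X i j)"])
    fix Y assume "Y \<in> {Y \<in> mats n1 n2. spec_norm n1 n2 Y \<le> 1}"
    then have Y: "Y \<in> mats n1 n2" "spec_norm n1 n2 Y \<le> 1" by auto
    have "Re (cnj (X i j) * Y i j) \<le> cmod (X i j)" for i j
    proof -
      have "Re (cnj (X i j) * Y i j) \<le> cmod (X i j) * cmod (Y i j)"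
        using complex_Re_le_cmod[of "cnj (X i j) * Y i j"] by (simp add: norm_mult)
      also have "\<dots> \<le> cmod (X i j) * 1"
        using norm_entry_le_spec_norm[OF Y(1), of i j] Y(2) by (intro mult_left_mono) auto
      finally show ?thesis by simp
    qed
    then show "minner n1 n2 X Y \<le> (\<Sum>i<n1. \<Sum>j<n2. cmod (X i j))"
      unfolding minner_def by (simp add: Re_sum sum_mono)
  qed
qed (use Y in auto)

lemma scale_in_mats: "Y \<in> mats n1 n2 \<Longrightarrow> (\<lambda>i j. complex_of_real c * Y i j) \<in> mats n1 n2"
  by (auto simp: mats_def)

text \<open>In the degenerate case \<open>\<parallel>A\<parallel> = 0\<close> every multiple \<open>t A\<close> lies in the dual unit ball, so
  \<open>\<langle>X, A\<rangle> \<le> 0\<close>.\<close>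

theorem minner_le_spec_norm_mult_nuc_norm:
  assumes A: "A \<in> mats n1 n2"
  shows "minner n1 n2 X A \<le> spec_norm n1 n2 A * nuc_norm n1 n2 X"
proof (cases "spec_norm n1 n2 A > 0")
  case True
  define \<sigma> where "\<sigma> = spec_norm n1 n2 A"
  have s: "\<sigma> > 0" using True by (simp add: \<sigma>_def)
  have "spec_norm n1 n2 (\<lambda>i j. complex_of_real (1/\<sigma>) * A i j) \<le> (1/\<sigma>) * \<sigma>"
    unfolding \<sigma>_def by (rule spec_norm_scale_le) (use s spec_norm_nonneg in auto)
  then have "minner n1 n2 X (\<lambda>i j. complex_of_real (1/\<sigma>) * A i j) \<le> nuc_norm n1 n2 X"
    using s by (intro minner_le_nuc_norm scale_in_mats A) auto
  then have "(1/\<sigma>) * minner n1 n2 X A \<le> nuc_norm n1 n2 X" by (simp only: minner_scale_right)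
  then show ?thesis using s by (simp add: \<sigma>_def field_simps)
next
  case False
  then have s0: "spec_norm n1 n2 A = 0" using spec_norm_nonneg[of n1 n2 A] by simp
  have scaled: "t * minner n1 n2 X A \<le> nuc_norm n1 n2 X" if t: "t > 0" for t
  proof -
    have "spec_norm n1 n2 (\<lambda>i j. complex_of_real t * A i j) \<le> 1"
      using spec_norm_scale_le[of t n1 n2 A] t s0 by simp
    then have "minner n1 n2 X (\<lambda>i j. complex_of_real t * A i j) \<le> nuc_norm n1 n2 X"
      by (intro minner_le_nuc_norm scale_in_mats A)
    then show ?thesis by (simp add: minner_scale_right)
  qed
  have "minner n1 n2 X A \<le> 0"
  proof (rule ccontr)
    assume "\<not> minner n1 n2 X A \<le> 0"
    then have p: "minner n1 n2 X A > 0" by simp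
    have "((\<bar>nuc_norm n1 n2 X\<bar> + 1) / minner n1 n2 X A) * minner n1 n2 X A \<le> nuc_norm n1 n2 X"
      using p by (intro scaled) auto
    then show False using p by simp
  qed
  then show ?thesis using s0 by simp
qed

section \<open>The sampling model\<close>

locale sampled_orthonormal_basis =
  fixes n1 n2 d d2 :: nat and VV :: "cmat set" and \<Theta> :: "nat \<Rightarrow> cmat"
    and \<alpha> \<beta> :: "nat set" and P :: "nat pmf" and \<mu>1 :: real
  assumes VV_mats: "VV \<subseteq> mats n1 n2"
    and basis_in: "\<forall>k\<in>{1..d}. \<Theta> k \<in> VV"
    and basis_orth: "\<forall>k\<in>{1..d}. \<forall>l\<in>{1..d}.
                       minner n1 n2 (\<Theta> k) (\<Theta> l) = (if k = l then 1 else 0)"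
    and basis_span: "\<forall>X\<in>VV. X = (\<lambda>i j. \<Sum>k=1..d. complex_of_real (minner n1 n2 (\<Theta> k) X) * \<Theta> k i j)"
    and \<beta>: "\<beta> = {1..d} - \<alpha>"
    and d2: "d2 = card \<beta>"
    and P_supp: "set_pmf P \<subseteq> \<beta>"
    and P_pos: "\<forall>k\<in>\<beta>. pmf P k > 0"
    and \<mu>1: "\<mu>1 \<ge> 1"
    and P_lower: "\<forall>k\<in>\<beta>. pmf P k \<ge> 1 / (\<mu>1 * real d2)"
begin

definition basis_coeff :: "cmat \<Rightarrow> nat \<Rightarrow> real" where
  "basis_coeff \<Delta> k = minner n1 n2 (\<Theta> k) \<Delta>"

definition sample_matrix :: "nat \<Rightarrow> (nat \<Rightarrow> nat) \<Rightarrow> (nat \<Rightarrow> real) \<Rightarrow> cmat" where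
  "sample_matrix m \<omega> \<epsilon> = (\<lambda>i j. \<Sum>l<m. complex_of_real (\<epsilon> l / real m) * \<Theta> (\<omega> l) i j)"

text \<open>Truncating the coefficients outside \<open>C(r) \<times> \<beta>\<close> makes them bounded by \<open>1\<close> everywhere, as
  required by the empirical-process bounds, without changing them where they matter.\<close>

definition trunc_coeff :: "nat \<Rightarrow> real \<Rightarrow> cmat \<Rightarrow> nat \<Rightarrow> real" where
  "trunc_coeff m r \<Delta> k = (if \<Delta> \<in> Cset n1 n2 VV \<Theta> \<alpha> \<beta> P m r \<and> k \<in> \<beta> then basis_coeff \<Delta> k else 0)"

lemma set_pmf_P: "set_pmf P = \<beta>"
  using P_supp P_pos by (auto simp: set_pmf_eq)

lemma finite_\<beta>: "finite \<beta>" and \<beta>_subset: "\<beta> \<subseteq> {1..d}"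
  using \<beta> by auto

lemma d2_pos: "real d2 > 0"
  using d2 finite_\<beta> set_pmf_not_empty[of P] by (simp add: card_gt_0_iff set_pmf_P)

lemma basis_in_mats: "k \<in> \<beta> \<Longrightarrow> \<Theta> k \<in> mats n1 n2"
  using basis_in \<beta>_subset VV_mats by blast

lemma n1_pos: "n1 > 0"
proof -
  obtain k where k: "k \<in> \<beta>" using set_pmf_not_empty[of P] by (auto simp: set_pmf_P)
  then have "minner n1 n2 (\<Theta> k) (\<Theta> k) = 1" using basis_orth \<beta>_subset by auto
  then show ?thesis by (cases n1) (auto simp: minner_def)
qed

lemma abs_coeff_le_1:
  assumes "\<Delta> \<in> Cset n1 n2 VV \<Theta> \<alpha> \<beta> P m r" "k \<in> \<beta>"
  shows "\<bar>basis_coeff \<Delta> k\<bar> \<le> 1"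
proof -
  have "\<bar>basis_coeff \<Delta> k\<bar> \<le> Max ((\<lambda>k. \<bar>basis_coeff \<Delta> k\<bar>) ` \<beta>)"
    using finite_\<beta> assms(2) by (intro Max_ge) auto
  then show ?thesis using assms(1) by (simp add: Cset_def basis_coeff_def)
qed

lemma minner_Qop_self: "minner n1 n2 (Qop n1 n2 \<Theta> \<beta> P \<Delta>) \<Delta> = (\<Sum>k\<in>\<beta>. pmf P k * (basis_coeff \<Delta> k)\<^sup>2)"
  unfolding Qop_def minner_sum_left by (simp add: basis_coeff_def power2_eq_square mult_ac)

lemma expectation_trunc_coeff_sq:
  assumes "\<Delta> \<in> Cset n1 n2 VV \<Theta> \<alpha> \<beta> P m r"
  shows "measure_pmf.expectation P (\<lambda>k. (trunc_coeff m r \<Delta> k)\<^sup>2)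
    = minner n1 n2 (Qop n1 n2 \<Theta> \<beta> P \<Delta>) \<Delta>"
  using assms finite_\<beta>
  by (simp add: expectation_finite_pmf set_pmf_P trunc_coeff_def minner_Qop_self mult.commute)

lemma minner_self_eq_sum_coeff_sq:
  assumes "\<Delta> \<in> VV" "\<forall>k\<in>\<alpha>. basis_coeff \<Delta> k = 0"
  shows "minner n1 n2 \<Delta> \<Delta> = (\<Sum>k\<in>\<beta>. (basis_coeff \<Delta> k)\<^sup>2)"
proof -
  have "minner n1 n2 \<Delta> \<Delta>
      = minner n1 n2 (\<lambda>i j. \<Sum>k=1..d. complex_of_real (basis_coeff \<Delta> k) * \<Theta> k i j) \<Delta>"
    using basis_span assms(1) by (simp add: basis_coeff_def)
  also have "\<dots> = (\<Sum>k=1..d. (basis_coeff \<Delta> k)\<^sup>2)"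
    by (simp add: minner_sum_left basis_coeff_def power2_eq_square)
  also have "\<dots> = (\<Sum>k\<in>\<beta>. (basis_coeff \<Delta> k)\<^sup>2)"
    by (rule sum.mono_neutral_right) (use \<beta> assms(2) in auto)
  finally show ?thesis .
qed

lemma frob_norm_le_sqrt_Qop:
  assumes "\<Delta> \<in> Cset n1 n2 VV \<Theta> \<alpha> \<beta> P m r"
  shows "frob_norm n1 n2 \<Delta> \<le> sqrt (\<mu>1 * real d2 * minner n1 n2 (Qop n1 n2 \<Theta> \<beta> P \<Delta>) \<Delta>)"
proof -
  have "(\<Sum>k\<in>\<beta>. (basis_coeff \<Delta> k)\<^sup>2) \<le> (\<Sum>k\<in>\<beta>. \<mu>1 * real d2 * (pmf P k * (basis_coeff \<Delta> k)\<^sup>2))"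
  proof (intro sum_mono)
    fix k assume "k \<in> \<beta>"
    then have "1 \<le> \<mu>1 * real d2 * pmf P k"
      using P_lower \<mu>1 d2_pos by (simp add: field_simps)
    from mult_right_mono[OF this zero_le_power2[of "basis_coeff \<Delta> k"]]
    show "(basis_coeff \<Delta> k)\<^sup>2 \<le> \<mu>1 * real d2 * (pmf P k * (basis_coeff \<Delta> k)\<^sup>2)" by (simp add: mult_ac)
  qed
  moreover have "minner n1 n2 \<Delta> \<Delta> = (\<Sum>k\<in>\<beta>. (basis_coeff \<Delta> k)\<^sup>2)"
    using assms by (intro minner_self_eq_sum_coeff_sq) (auto simp: Cset_def basis_coeff_def)
  ultimately show ?thesis
    unfolding frob_norm_def minner_Qop_self by (simp add: sum_distrib_left[symmetric])
qed

lemma rademacher_average_coeff_le: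
  assumes \<Delta>: "\<Delta> \<in> Cset n1 n2 VV \<Theta> \<alpha> \<beta> P m r" and r: "r > 0" and \<omega>: "\<forall>l<m. \<omega> l \<in> \<beta>"
  shows "(1 / real m) * (\<Sum>l<m. \<epsilon> l * basis_coeff \<Delta> (\<omega> l))
    \<le> spec_norm n1 n2 (sample_matrix m \<omega> \<epsilon>)
       * sqrt (r * \<mu>1 * real d2 * minner n1 n2 (Qop n1 n2 \<Theta> \<beta> P \<Delta>) \<Delta>)"
proof -
  have A: "sample_matrix m \<omega> \<epsilon> \<in> mats n1 n2"
    using basis_in_mats \<omega> by (auto simp: sample_matrix_def mats_def)
  have "(1 / real m) * (\<Sum>l<m. \<epsilon> l * basis_coeff \<Delta> (\<omega> l)) = minner n1 n2 \<Delta> (sample_matrix m \<omega> \<epsilon>)"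
    unfolding sample_matrix_def minner_sum_right
    by (simp add: basis_coeff_def sum_distrib_left minner_commute)
  also have "\<dots> \<le> spec_norm n1 n2 (sample_matrix m \<omega> \<epsilon>) * nuc_norm n1 n2 \<Delta>"
    by (rule minner_le_spec_norm_mult_nuc_norm[OF A])
  also have "\<dots> \<le> spec_norm n1 n2 (sample_matrix m \<omega> \<epsilon>) * (sqrt r * frob_norm n1 n2 \<Delta>)"
    using \<Delta> by (intro mult_left_mono spec_norm_nonneg) (auto simp: Cset_def)
  also have "\<dots> \<le> spec_norm n1 n2 (sample_matrix m \<omega> \<epsilon>)
      * (sqrt r * sqrt (\<mu>1 * real d2 * minner n1 n2 (Qop n1 n2 \<Theta> \<beta> P \<Delta>) \<Delta>))"
    using r by (intro mult_left_mono frob_norm_le_sqrt_Qop[OF \<Delta>] spec_norm_nonneg) auto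
  finally show ?thesis by (simp add: real_sqrt_mult mult_ac)
qed

lemma set_pmf_omega_pmfD: "\<omega> \<in> set_pmf (omega_pmf P m) \<Longrightarrow> l < m \<Longrightarrow> \<omega> l \<in> \<beta>"
  unfolding omega_pmf_def by (subst (asm) set_Pi_pmf) (auto simp: PiE_dflt_def set_pmf_P)

lemma quadratic_empirical_process_Cset:
  assumes m: "m \<ge> 1" and r: "r > 0"
  shows "quadratic_empirical_process P m (trunc_coeff m r) (Cset n1 n2 VV \<Theta> \<alpha> \<beta> P m r)
           (\<lambda>\<omega> \<epsilon>. spec_norm n1 n2 (sample_matrix m \<omega> \<epsilon>)) (r * \<mu>1 * real d2)"
proof
  show "finite (set_pmf P)" using finite_\<beta> by (simp add: set_pmf_P)
  show "\<bar>trunc_coeff m r \<Delta> k\<bar> \<le> 1" for \<Delta> k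
    using abs_coeff_le_1 by (auto simp: trunc_coeff_def)
  show "r * \<mu>1 * real d2 \<ge> 0" using r \<mu>1 d2_pos by simp
next
  fix \<omega> \<epsilon> \<Delta>
  assume \<omega>: "\<omega> \<in> set_pmf (Pi_pmf {..<m} 0 (\<lambda>_. P))" and \<Delta>: "\<Delta> \<in> Cset n1 n2 VV \<Theta> \<alpha> \<beta> P m r"
  have \<omega>\<beta>: "\<forall>l<m. \<omega> l \<in> \<beta>" using set_pmf_omega_pmfD \<omega> by (auto simp: omega_pmf_def)
  then have "(\<Sum>l<m. \<epsilon> l * trunc_coeff m r \<Delta> (\<omega> l)) = (\<Sum>l<m. \<epsilon> l * basis_coeff \<Delta> (\<omega> l))"
    using \<Delta> by (intro sum.cong) (auto simp: trunc_coeff_def)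
  then show "1 / real m * (\<Sum>l<m. \<epsilon> l * trunc_coeff m r \<Delta> (\<omega> l))
      \<le> spec_norm n1 n2 (sample_matrix m \<omega> \<epsilon>)
         * sqrt (r * \<mu>1 * real d2 * measure_pmf.expectation P (\<lambda>k. (trunc_coeff m r \<Delta> k)\<^sup>2))"
    using rademacher_average_coeff_le[OF \<Delta> r \<omega>\<beta>] by (simp add: expectation_trunc_coeff_sq[OF \<Delta>])
qed (use m spec_norm_nonneg in auto)

lemma vartheta_eq:
  "vartheta n1 n2 \<Theta> P m = measure_pmf.expectation (omega_pmf P m)
     (\<lambda>\<omega>. measure_pmf.expectation (rademacher_pmf m) (\<lambda>\<epsilon>. spec_norm n1 n2 (sample_matrix m \<omega> \<epsilon>)))"
  unfolding vartheta_def sample_matrix_def case_prod_unfold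
  using finite_\<beta> by (subst expectation_pair_pmf_finite)
    (auto simp: omega_pmf_def set_pmf_P finite_set_rademacher_pmf intro!: finite_set_Pi_pmf)

end

theorem (in sampled_orthonormal_basis) Cset_restricted_strong_convexity:
  assumes m: "m \<ge> 1" and r: "r > 0" and N: "n1 + n2 \<ge> 3"
  shows "measure_pmf.prob (omega_pmf P m)
           {\<omega>. \<forall>\<Delta>\<in>Cset n1 n2 VV \<Theta> \<alpha> \<beta> P m r.
               (1 / real m) * (\<Sum>i<m. (minner n1 n2 (\<Theta> (\<omega> i)) \<Delta>)\<^sup>2)
                 \<ge> 1/2 * minner n1 n2 (Qop n1 n2 \<Theta> \<beta> P \<Delta>) \<Delta>
                   - 128 * \<mu>1 * real d2 * r * (vartheta n1 n2 \<Theta> P m)\<^sup>2}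
         \<ge> 1 - 2 / real (n1 + n2)"
proof -
  have N_real: "real (n1 + n2) \<ge> 3" using N by simp
  define C where "C = Cset n1 n2 VV \<Theta> \<alpha> \<beta> P m r"
  interpret process: quadratic_empirical_process P m "trunc_coeff m r" C
    "\<lambda>\<omega> \<epsilon>. spec_norm n1 n2 (sample_matrix m \<omega> \<epsilon>)" "r * \<mu>1 * real d2"
    unfolding C_def by (rule quadratic_empirical_process_Cset[OF m r])
  have sample: "process.sample = omega_pmf P m"
    by (simp add: process.sample_def omega_pmf_def)
  have theta: "process.theta = vartheta n1 n2 \<Theta> P m"
    by (simp add: process.theta_def sample vartheta_eq)
  have mean: "process.mean \<Delta> = minner n1 n2 (Qop n1 n2 \<Theta> \<beta> P \<Delta>) \<Delta>" if "\<Delta> \<in> C" for \<Delta>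
    using that by (simp add: process.mean_def expectation_trunc_coeff_sq C_def)
  have emp_mean: "process.emp_mean \<omega> \<Delta> = (1 / real m) * (\<Sum>i<m. (minner n1 n2 (\<Theta> (\<omega> i)) \<Delta>)\<^sup>2)"
    if "\<omega> \<in> set_pmf (omega_pmf P m)" "\<Delta> \<in> C" for \<omega> \<Delta>
    unfolding process.emp_mean_def using that set_pmf_omega_pmfD[OF that(1)]
    by (auto simp: trunc_coeff_def basis_coeff_def C_def intro!: sum.cong)
  have "1 - 2 / real (n1 + n2) \<le> 1 - 1 / real (n1 + n2)" using N_real by (simp add: field_simps)
  also have "\<dots> \<le> measure_pmf.prob process.sample
      {\<omega>. \<forall>\<Delta>\<in>C. process.emp_mean \<omega> \<Delta>
              \<ge> 1/2 * process.mean \<Delta> - 32 * (r * \<mu>1 * real d2) * process.theta\<^sup>2}"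
    by (rule process.emp_mean_lower_bound_whp[OF N_real]) (simp add: mean C_def Cset_def)
  also have "\<dots> \<le> measure_pmf.prob (omega_pmf P m)
           {\<omega>. \<forall>\<Delta>\<in>C. (1 / real m) * (\<Sum>i<m. (minner n1 n2 (\<Theta> (\<omega> i)) \<Delta>)\<^sup>2)
                 \<ge> 1/2 * minner n1 n2 (Qop n1 n2 \<Theta> \<beta> P \<Delta>) \<Delta>
                   - 128 * \<mu>1 * real d2 * r * (vartheta n1 n2 \<Theta> P m)\<^sup>2}"
    unfolding sample
  proof (rule prob_mono_on_support, safe)
    fix \<omega> \<Delta> assume \<omega>: "\<omega> \<in> set_pmf (omega_pmf P m)" and \<Delta>: "\<Delta> \<in> C"
      and bound: "\<forall>\<Delta>\<in>C. process.emp_mean \<omega> \<Delta>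
              \<ge> 1/2 * process.mean \<Delta> - 32 * (r * \<mu>1 * real d2) * process.theta\<^sup>2"
    define K where "K = r * \<mu>1 * real d2 * process.theta\<^sup>2"
    have "K \<ge> 0" using r \<mu>1 by (simp add: K_def)
    moreover have "process.emp_mean \<omega> \<Delta> \<ge> 1/2 * process.mean \<Delta> - 32 * K"
      using bound \<Delta> by (simp add: K_def mult_ac)
    moreover have "128 * \<mu>1 * real d2 * r * process.theta\<^sup>2 = 128 * K" by (simp add: K_def mult_ac)
    ultimately show "1/2 * minner n1 n2 (Qop n1 n2 \<Theta> \<beta> P \<Delta>) \<Delta>
          - 128 * \<mu>1 * real d2 * r * (vartheta n1 n2 \<Theta> P m)\<^sup>2
        \<le> (1 / real m) * (\<Sum>i<m. (minner n1 n2 (\<Theta> (\<omega> i)) \<Delta>)\<^sup>2)"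
      unfolding emp_mean[OF \<omega> \<Delta>, symmetric] mean[OF \<Delta>, symmetric] theta[symmetric] by linarith
  qed
  finally show ?thesis unfolding C_def .
qed

theorem mainTheorem2:
  fixes n1 n2 d m d2 :: nat and VV :: "cmat set" and \<Theta> :: "nat \<Rightarrow> cmat"
    and \<alpha> \<beta> :: "nat set" and P :: "nat pmf" and \<mu>1 r :: real
  assumes VV: "VV = mats n1 n2 \<or> VV = real_mats n1 n2
               \<or> (n1 = n2 \<and> (VV = sym_mats n1 \<or> VV = herm_mats n1))"
    and basis_in: "\<forall>k\<in>{1..d}. \<Theta> k \<in> VV"
    and basis_orth: "\<forall>k\<in>{1..d}. \<forall>l\<in>{1..d}.
                       minner n1 n2 (\<Theta> k) (\<Theta> l) = (if k = l then 1 else 0)"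
    and basis_span: "\<forall>X\<in>VV. X = (\<lambda>i j. \<Sum>k=1..d. complex_of_real (minner n1 n2 (\<Theta> k) X) * \<Theta> k i j)"
    and \<alpha>: "\<alpha> \<subseteq> {1..d}"
    and \<beta>: "\<beta> = {1..d} - \<alpha>"
    and d2: "d2 = card \<beta>"
    and P_supp: "set_pmf P \<subseteq> \<beta>"
    and P_pos: "\<forall>k\<in>\<beta>. pmf P k > 0"
    and \<mu>1: "\<mu>1 \<ge> 1"
    and P_lower: "\<forall>k\<in>\<beta>. pmf P k \<ge> 1 / (\<mu>1 * real d2)"
    and m: "m \<ge> 1"
    and r: "r > 0"
  shows "measure_pmf.prob (omega_pmf P m)
           {\<omega>. \<forall>\<Delta>\<in>Cset n1 n2 VV \<Theta> \<alpha> \<beta> P m r.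
               (1 / real m) * (\<Sum>i<m. (minner n1 n2 (\<Theta> (\<omega> i)) \<Delta>)\<^sup>2)
                 \<ge> 1/2 * minner n1 n2 (Qop n1 n2 \<Theta> \<beta> P \<Delta>) \<Delta>
                   - 128 * \<mu>1 * real d2 * r * (vartheta n1 n2 \<Theta> P m)\<^sup>2}
         \<ge> 1 - 2 / real (n1 + n2)"
proof -
  have "VV \<subseteq> mats n1 n2"
    using VV by (auto simp: real_mats_def sym_mats_def herm_mats_def)
  then interpret sampled_orthonormal_basis n1 n2 d d2 VV \<Theta> \<alpha> \<beta> P \<mu>1
    using assms by unfold_locales
  show ?thesis
  proof (cases "n1 + n2 \<ge> 3")
    case True
    then show ?thesis by (rule Cset_restricted_strong_convexity[OF m r])
  next
    case False
    then have "real (n1 + n2) \<le> 2" "real (n1 + n2) > 0" using n1_pos by simp_all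
    then have "1 - 2 / real (n1 + n2) \<le> 0" by (simp add: field_simps)
    then show ?thesis by (rule order_trans[OF _ measure_nonneg])
  qed
qed

end
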